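(* Let $A$ be a coherent commutative ring. Then $A$ is an fqp-ring if and only if $A_P$ is an fqp-ring for each maximal ideal $P$ of $A$.
   Context: A ring is coherent if all its finitely generated ideals are finitely presented. A module $V$ is quasi-projective if the natural map $\mathrm{Hom}(V,V)\to\mathrm{Hom}(V,V/X)$ is surjective for every submodule $X$ of $V$; a ring is an fqp-ring if every finitely generated ideal is quasi-projective. *)

theory Defs
  imports "HOL-Algebra.QuotRing"
begin

definition fg_ideal :: "('a, 'b) ring_scheme \<Rightarrow> 'a set \<Rightarrow> bool" where
  "fg_ideal R I \<longleftrightarrow> (\<exists>S. finite S \<and> S \<subseteq> carrier R \<and> I = Idl\<^bsub>R\<^esub> S)"

text \<open>An ideal I is finitely presented (as an R-module) if there is a surjection
  R^n \<rightarrow> I, given by generators a_0..a_(n-1) of I, whose kernel (the module of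
  relations among the a_i) is finitely generated. Vectors of R^n are functions
  nat \<Rightarrow> 'a, only the components i < n being relevant.\<close>
definition fp_ideal :: "('a, 'b) ring_scheme \<Rightarrow> 'a set \<Rightarrow> bool" where
  "fp_ideal R I \<longleftrightarrow>
    (\<exists>(n::nat) a. (\<forall>i<n. a i \<in> carrier R) \<and>
       I = {(\<Oplus>\<^bsub>R\<^esub> i\<in>{..<n}. r i \<otimes>\<^bsub>R\<^esub> a i) | r. \<forall>i<n. r i \<in> carrier R} \<and>
       (\<exists>(m::nat) g. (\<forall>j<m. \<forall>i<n. g j i \<in> carrier R) \<and>
          (\<forall>j<m. (\<Oplus>\<^bsub>R\<^esub> i\<in>{..<n}. g j i \<otimes>\<^bsub>R\<^esub> a i) = \<zero>\<^bsub>R\<^esub>) \<and>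
          (\<forall>r. (\<forall>i<n. r i \<in> carrier R) \<and> (\<Oplus>\<^bsub>R\<^esub> i\<in>{..<n}. r i \<otimes>\<^bsub>R\<^esub> a i) = \<zero>\<^bsub>R\<^esub> \<longrightarrow>
             (\<exists>c. (\<forall>j<m. c j \<in> carrier R) \<and>
                  (\<forall>i<n. r i = (\<Oplus>\<^bsub>R\<^esub> j\<in>{..<m}. c j \<otimes>\<^bsub>R\<^esub> g j i))))))"

definition coherent_ring :: "('a, 'b) ring_scheme \<Rightarrow> bool" where
  "coherent_ring R \<longleftrightarrow> (\<forall>I. ideal I R \<and> fg_ideal R I \<longrightarrow> fp_ideal R I)"

definition submod :: "('a, 'b) ring_scheme \<Rightarrow> 'a set \<Rightarrow> 'a set \<Rightarrow> bool" where
  "submod R V N \<longleftrightarrow> N \<subseteq> V \<and> \<zero>\<^bsub>R\<^esub> \<in> N \<and>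
     (\<forall>x\<in>N. \<forall>y\<in>N. x \<oplus>\<^bsub>R\<^esub> y \<in> N) \<and> (\<forall>x\<in>N. a_inv R x \<in> N) \<and>
     (\<forall>r\<in>carrier R. \<forall>x\<in>N. r \<otimes>\<^bsub>R\<^esub> x \<in> N)"

definition lin_map :: "('a, 'b) ring_scheme \<Rightarrow> 'a set \<Rightarrow> 'a set \<Rightarrow> ('a \<Rightarrow> 'a) \<Rightarrow> bool" where
  "lin_map R V W f \<longleftrightarrow> (\<forall>v\<in>V. f v \<in> W) \<and>
     (\<forall>u\<in>V. \<forall>v\<in>V. f (u \<oplus>\<^bsub>R\<^esub> v) = f u \<oplus>\<^bsub>R\<^esub> f v) \<and>
     (\<forall>r\<in>carrier R. \<forall>v\<in>V. f (r \<otimes>\<^bsub>R\<^esub> v) = r \<otimes>\<^bsub>R\<^esub> f v)"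

text \<open>Quotient module V/N: elements are the cosets N + v, addition is set addition,
  and r \<cdot> (N + v) = N + r(N + v) = N + rv.\<close>
definition quot_carrier :: "('a, 'b) ring_scheme \<Rightarrow> 'a set \<Rightarrow> 'a set \<Rightarrow> 'a set set" where
  "quot_carrier R V N = {N +>\<^bsub>R\<^esub> v | v. v \<in> V}"

definition quot_smult :: "('a, 'b) ring_scheme \<Rightarrow> 'a set \<Rightarrow> 'a \<Rightarrow> 'a set \<Rightarrow> 'a set" where
  "quot_smult R N r C = N <+>\<^bsub>R\<^esub> ((\<lambda>c. r \<otimes>\<^bsub>R\<^esub> c) ` C)"

definition lin_map_quot :: "('a, 'b) ring_scheme \<Rightarrow> 'a set \<Rightarrow> 'a set \<Rightarrow> ('a \<Rightarrow> 'a set) \<Rightarrow> bool" where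
  "lin_map_quot R V N g \<longleftrightarrow> (\<forall>v\<in>V. g v \<in> quot_carrier R V N) \<and>
     (\<forall>u\<in>V. \<forall>v\<in>V. g (u \<oplus>\<^bsub>R\<^esub> v) = g u <+>\<^bsub>R\<^esub> g v) \<and>
     (\<forall>r\<in>carrier R. \<forall>v\<in>V. g (r \<otimes>\<^bsub>R\<^esub> v) = quot_smult R N r (g v))"

definition quasi_projective :: "('a, 'b) ring_scheme \<Rightarrow> 'a set \<Rightarrow> bool" where
  "quasi_projective R V \<longleftrightarrow>
    (\<forall>N g. submod R V N \<and> lin_map_quot R V N g \<longrightarrow>
       (\<exists>f. lin_map R V V f \<and> (\<forall>v\<in>V. N +>\<^bsub>R\<^esub> f v = g v)))"

definition fqp_ring :: "('a, 'b) ring_scheme \<Rightarrow> bool" where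
  "fqp_ring R \<longleftrightarrow> (\<forall>I. ideal I R \<and> fg_ideal R I \<longrightarrow> quasi_projective R I)"

text \<open>Fractions a/s with s \<notin> P; (a,s) ~ (b,t) iff u(at - bs) = 0 for some u \<notin> P.\<close>
definition loc_cls :: "('a, 'b) ring_scheme \<Rightarrow> 'a set \<Rightarrow> 'a \<times> 'a \<Rightarrow> ('a \<times> 'a) set" where
  "loc_cls R P as = {(b, t). b \<in> carrier R \<and> t \<in> carrier R - P \<and>
      (\<exists>u\<in>carrier R - P. u \<otimes>\<^bsub>R\<^esub> ((fst as \<otimes>\<^bsub>R\<^esub> t) \<ominus>\<^bsub>R\<^esub> (b \<otimes>\<^bsub>R\<^esub> snd as)) = \<zero>\<^bsub>R\<^esub>)}"

definition loc_mult :: "('a, 'b) ring_scheme \<Rightarrow> 'a set \<Rightarrow> ('a \<times> 'a) set \<Rightarrow> ('a \<times> 'a) set \<Rightarrow> ('a \<times> 'a) set" where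
  "loc_mult R P C D = \<Union>{loc_cls R P (a \<otimes>\<^bsub>R\<^esub> b, s \<otimes>\<^bsub>R\<^esub> t) | a s b t. (a, s) \<in> C \<and> (b, t) \<in> D}"

definition loc_add :: "('a, 'b) ring_scheme \<Rightarrow> 'a set \<Rightarrow> ('a \<times> 'a) set \<Rightarrow> ('a \<times> 'a) set \<Rightarrow> ('a \<times> 'a) set" where
  "loc_add R P C D = \<Union>{loc_cls R P ((a \<otimes>\<^bsub>R\<^esub> t) \<oplus>\<^bsub>R\<^esub> (b \<otimes>\<^bsub>R\<^esub> s), s \<otimes>\<^bsub>R\<^esub> t) | a s b t.
                         (a, s) \<in> C \<and> (b, t) \<in> D}"

definition localization :: "('a, 'b) ring_scheme \<Rightarrow> 'a set \<Rightarrow> ('a \<times> 'a) set ring" where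
  "localization R P =
    \<lparr>carrier = {loc_cls R P (a, s) | a s. a \<in> carrier R \<and> s \<in> carrier R - P},
     mult = loc_mult R P,
     one = loc_cls R P (\<one>\<^bsub>R\<^esub>, \<one>\<^bsub>R\<^esub>),
     zero = loc_cls R P (\<zero>\<^bsub>R\<^esub>, \<one>\<^bsub>R\<^esub>),
     add = loc_add R P\<rparr>"

end

theory Submission
  imports Defs "HOL-Algebra.Multiplicative_Group"
begin

text \<open>An ideal \<open>V\<close> generated by \<open>a\<^sub>1, \<dots>, a\<^sub>n\<close> is quasi-projective iff every tuple \<open>y \<in> V\<^sup>n\<close>
  satisfying the relations of \<open>a\<close> modulo a submodule \<open>N\<close> is congruent modulo \<open>N\<close> to a tuple
  satisfying them exactly. This lifting property passes from \<open>A\<close> to \<open>A\<^sub>P\<close> by clearing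
  denominators, which gives one direction. Conversely, if \<open>A\<close> is coherent, the relations of \<open>a\<close>
  are generated by finitely many \<open>g\<^sub>1, \<dots>, g\<^sub>m\<close>, and the \<open>x \<in> A\<close> for which \<open>x y\<close> can be
  corrected modulo \<open>N\<close> to satisfy all \<open>g\<^sub>j\<close> form an ideal. A lift in \<open>A\<^sub>P\<close>, after clearing
  the finitely many denominators, yields such an \<open>x \<notin> P\<close>; so the ideal is not contained in any
  maximal ideal, and \<open>x = 1\<close> gives the required lift in \<open>A\<close>.\<close>

definition lin_span :: "('a, 'b) ring_scheme \<Rightarrow> nat \<Rightarrow> (nat \<Rightarrow> 'a) \<Rightarrow> 'a set" where
  "lin_span R n a = {(\<Oplus>\<^bsub>R\<^esub> i\<in>{..<n}. r i \<otimes>\<^bsub>R\<^esub> a i) | r. \<forall>i<n. r i \<in> carrier R}"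

definition is_relation :: "('a, 'b) ring_scheme \<Rightarrow> nat \<Rightarrow> (nat \<Rightarrow> 'a) \<Rightarrow> (nat \<Rightarrow> 'a) \<Rightarrow> bool" where
  "is_relation R n a r \<longleftrightarrow>
     (\<forall>i<n. r i \<in> carrier R) \<and> (\<Oplus>\<^bsub>R\<^esub> i\<in>{..<n}. r i \<otimes>\<^bsub>R\<^esub> a i) = \<zero>\<^bsub>R\<^esub>"

definition respects_relations ::
    "('a, 'b) ring_scheme \<Rightarrow> nat \<Rightarrow> (nat \<Rightarrow> 'a) \<Rightarrow> 'a set \<Rightarrow> (nat \<Rightarrow> 'a) \<Rightarrow> bool" where
  "respects_relations R n a N y \<longleftrightarrow>
     (\<forall>r. is_relation R n a r \<longrightarrow> (\<Oplus>\<^bsub>R\<^esub> i\<in>{..<n}. r i \<otimes>\<^bsub>R\<^esub> y i) \<in> N)"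

text \<open>A linear map from \<open>V = lin_span R n a\<close> to a module \<open>W\<close> is the same as an \<open>n\<close>-tuple in
  \<open>W\<close> satisfying the relations of \<open>a\<close>. For \<open>W = V/N\<close> such tuples are represented by tuples
  in \<open>V\<close> respecting the relations modulo \<open>N\<close>, so quasi-projectivity of \<open>V\<close> becomes the
  following lifting property.\<close>
definition relation_lifting :: "('a, 'b) ring_scheme \<Rightarrow> nat \<Rightarrow> (nat \<Rightarrow> 'a) \<Rightarrow> bool" where
  "relation_lifting R n a \<longleftrightarrow>
     (\<forall>N y. submod R (lin_span R n a) N \<and> (\<forall>i<n. y i \<in> lin_span R n a) \<and>
        respects_relations R n a N y \<longrightarrow>
        (\<exists>z. (\<forall>i<n. z i \<in> lin_span R n a) \<and> (\<forall>i<n. z i \<ominus>\<^bsub>R\<^esub> y i \<in> N) \<and>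
           respects_relations R n a {\<zero>\<^bsub>R\<^esub>} z))"

text \<open>\<open>lin_coeffs\<close> picks some coefficients of \<open>v\<close>, so \<open>lin_ext R n a y\<close> is only meaningful when
  \<open>y\<close> respects the relations of \<open>a\<close>.\<close>
definition lin_coeffs :: "('a, 'b) ring_scheme \<Rightarrow> nat \<Rightarrow> (nat \<Rightarrow> 'a) \<Rightarrow> 'a \<Rightarrow> nat \<Rightarrow> 'a" where
  "lin_coeffs R n a v =
     (SOME r. (\<forall>i<n. r i \<in> carrier R) \<and> v = (\<Oplus>\<^bsub>R\<^esub> i\<in>{..<n}. r i \<otimes>\<^bsub>R\<^esub> a i))"

definition lin_ext :: "('a, 'b) ring_scheme \<Rightarrow> nat \<Rightarrow> (nat \<Rightarrow> 'a) \<Rightarrow> (nat \<Rightarrow> 'a) \<Rightarrow> 'a \<Rightarrow> 'a" where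
  "lin_ext R n a y v = (\<Oplus>\<^bsub>R\<^esub> i\<in>{..<n}. lin_coeffs R n a v i \<otimes>\<^bsub>R\<^esub> y i)"

context cring
begin

lemma fsum_Suc:
  fixes n :: nat
  assumes "\<And>i. i < Suc n \<Longrightarrow> f i \<in> carrier R"
  shows "(\<Oplus>i\<in>{..<Suc n}. f i) = f n \<oplus> (\<Oplus>i\<in>{..<n}. f i)"
  using assms by (simp add: lessThan_Suc Pi_def)

lemma fsum_closed:
  fixes n :: nat
  assumes "\<And>i. i < n \<Longrightarrow> f i \<in> carrier R"
  shows "(\<Oplus>i\<in>{..<n}. f i) \<in> carrier R"
  using assms by (intro finsum_closed) auto

lemma fsum_mem:
  fixes n :: nat
  assumes "\<zero> \<in> N" "\<And>x y. x \<in> N \<Longrightarrow> y \<in> N \<Longrightarrow> x \<oplus> y \<in> N" "N \<subseteq> carrier R"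
    and "\<And>i. i < n \<Longrightarrow> f i \<in> N"
  shows "(\<Oplus>i\<in>{..<n}. f i) \<in> N"
  using assms(4)
proof (induction n)
  case (Suc n)
  then have "(\<Oplus>i\<in>{..<Suc n}. f i) = f n \<oplus> (\<Oplus>i\<in>{..<n}. f i)"
    using assms(3) by (intro fsum_Suc) auto
  then show ?case using Suc assms(2) by simp
qed (use assms(1) in simp)

lemma fsum_cong:
  fixes n :: nat
  assumes "\<And>i. i < n \<Longrightarrow> f i = g i" "\<And>i. i < n \<Longrightarrow> g i \<in> carrier R"
  shows "(\<Oplus>i\<in>{..<n}. f i) = (\<Oplus>i\<in>{..<n}. g i)"
  using assms by (intro finsum_cong') auto

lemma fsum_add:
  fixes n :: nat
  assumes "\<And>i. i < n \<Longrightarrow> f i \<in> carrier R" "\<And>i. i < n \<Longrightarrow> g i \<in> carrier R"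
  shows "(\<Oplus>i\<in>{..<n}. f i \<oplus> g i) = (\<Oplus>i\<in>{..<n}. f i) \<oplus> (\<Oplus>i\<in>{..<n}. g i)"
  using assms by (intro finsum_addf) auto

lemma fsum_smult:
  fixes n :: nat
  assumes "\<And>i. i < n \<Longrightarrow> f i \<in> carrier R" "c \<in> carrier R"
  shows "(\<Oplus>i\<in>{..<n}. c \<otimes> f i) = c \<otimes> (\<Oplus>i\<in>{..<n}. f i)"
  using assms by (intro finsum_rdistr[symmetric]) auto

lemma fsum_minus:
  fixes n :: nat
  assumes f: "\<And>i. i < n \<Longrightarrow> f i \<in> carrier R" and g: "\<And>i. i < n \<Longrightarrow> g i \<in> carrier R"
  shows "(\<Oplus>i\<in>{..<n}. f i \<ominus> g i) = (\<Oplus>i\<in>{..<n}. f i) \<ominus> (\<Oplus>i\<in>{..<n}. g i)"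
proof -
  have "(\<Oplus>i\<in>{..<n}. f i \<ominus> g i) = (\<Oplus>i\<in>{..<n}. f i \<oplus> \<ominus>\<one> \<otimes> g i)"
    using f g by (intro fsum_cong) (auto simp: a_minus_def l_minus)
  also have "\<dots> = (\<Oplus>i\<in>{..<n}. f i) \<oplus> \<ominus>\<one> \<otimes> (\<Oplus>i\<in>{..<n}. g i)"
    using f g by (simp add: fsum_add fsum_smult)
  finally show ?thesis
    using g fsum_closed[OF g] by (simp add: a_minus_def l_minus)
qed

lemma fsum_delta:
  fixes n :: nat
  assumes "k < n" "\<And>i. i < n \<Longrightarrow> f i \<in> carrier R"
  shows "(\<Oplus>i\<in>{..<n}. (if i = k then \<one> else \<zero>) \<otimes> f i) = f k"
proof -
  have "(\<Oplus>i\<in>{..<n}. (if i = k then \<one> else \<zero>) \<otimes> f i) = (\<Oplus>i\<in>{..<n}. if k = i then f i else \<zero>)"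
    using assms by (intro fsum_cong) auto
  also have "\<dots> = f k"
    using assms by (intro add.finprod_singleton) auto
  finally show ?thesis .
qed

lemma fsum_fsum_swap:
  fixes n m :: nat
  assumes "\<And>j i. j < m \<Longrightarrow> i < n \<Longrightarrow> h j i \<in> carrier R"
  shows "(\<Oplus>i\<in>{..<n}. \<Oplus>j\<in>{..<m}. h j i) = (\<Oplus>j\<in>{..<m}. \<Oplus>i\<in>{..<n}. h j i)"
  using assms
proof (induction m)
  case (Suc m)
  have "(\<Oplus>i\<in>{..<n}. \<Oplus>j\<in>{..<Suc m}. h j i) = (\<Oplus>i\<in>{..<n}. h m i \<oplus> (\<Oplus>j\<in>{..<m}. h j i))"
    using Suc.prems by (intro fsum_cong) (auto simp: fsum_Suc intro!: fsum_closed)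
  also have "\<dots> = (\<Oplus>i\<in>{..<n}. h m i) \<oplus> (\<Oplus>j\<in>{..<m}. \<Oplus>i\<in>{..<n}. h j i)"
    using Suc by (simp add: fsum_add fsum_closed)
  also have "\<dots> = (\<Oplus>j\<in>{..<Suc m}. \<Oplus>i\<in>{..<n}. h j i)"
    using Suc.prems by (simp add: fsum_Suc fsum_closed)
  finally show ?case .
qed (simp add: finsum_zero)

lemma fsum_swap:
  fixes n m :: nat
  assumes "\<And>j i. j < m \<Longrightarrow> i < n \<Longrightarrow> g j i \<in> carrier R" "\<And>j. j < m \<Longrightarrow> c j \<in> carrier R"
    and "\<And>i. i < n \<Longrightarrow> x i \<in> carrier R"
  shows "(\<Oplus>i\<in>{..<n}. (\<Oplus>j\<in>{..<m}. c j \<otimes> g j i) \<otimes> x i) =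
    (\<Oplus>j\<in>{..<m}. c j \<otimes> (\<Oplus>i\<in>{..<n}. g j i \<otimes> x i))"
proof -
  have "(\<Oplus>i\<in>{..<n}. (\<Oplus>j\<in>{..<m}. c j \<otimes> g j i) \<otimes> x i) =
      (\<Oplus>i\<in>{..<n}. \<Oplus>j\<in>{..<m}. c j \<otimes> (g j i \<otimes> x i))"
  proof (rule fsum_cong)
    fix i assume "i < n"
    then show "(\<Oplus>j\<in>{..<m}. c j \<otimes> g j i) \<otimes> x i = (\<Oplus>j\<in>{..<m}. c j \<otimes> (g j i \<otimes> x i))"
      using assms by (subst finsum_ldistr) (auto intro!: finsum_cong' simp: m_assoc)
  qed (use assms in \<open>auto intro!: finsum_closed\<close>)
  also have "\<dots> = (\<Oplus>j\<in>{..<m}. \<Oplus>i\<in>{..<n}. c j \<otimes> (g j i \<otimes> x i))"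
    using assms by (intro fsum_fsum_swap) auto
  also have "\<dots> = (\<Oplus>j\<in>{..<m}. c j \<otimes> (\<Oplus>i\<in>{..<n}. g j i \<otimes> x i))"
    using assms by (intro fsum_cong) (auto simp: fsum_smult intro!: fsum_closed)
  finally show ?thesis .
qed

lemma ideal_by_closure:
  assumes "I \<subseteq> carrier R" "\<zero> \<in> I" "\<And>x y. x \<in> I \<Longrightarrow> y \<in> I \<Longrightarrow> x \<oplus> y \<in> I"
    and "\<And>r x. r \<in> carrier R \<Longrightarrow> x \<in> I \<Longrightarrow> r \<otimes> x \<in> I"
  shows "ideal I R"
proof (rule idealI)
  show "subgroup I (add_monoid R)"
  proof
    show "inv\<^bsub>add_monoid R\<^esub> x \<in> I" if "x \<in> I" for x
    proof -
      have "inv\<^bsub>add_monoid R\<^esub> x = \<ominus>\<one> \<otimes> x"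
        using that assms(1) by (auto simp: a_inv_def[symmetric] l_minus)
      then show ?thesis using assms that by simp
    qed
  qed (use assms in auto)
  show "a \<otimes> x \<in> I" if "a \<in> I" "x \<in> carrier R" for a x
    using assms that m_comm[of a x] by auto
qed (use assms in \<open>auto intro: ring_axioms\<close>)

lemma lincomb_add:
  fixes n :: nat
  assumes "\<And>i. i < n \<Longrightarrow> a i \<in> carrier R" "\<forall>i<n. r i \<in> carrier R" "\<forall>i<n. r' i \<in> carrier R"
  shows "(\<Oplus>i\<in>{..<n}. (r i \<oplus> r' i) \<otimes> a i) = (\<Oplus>i\<in>{..<n}. r i \<otimes> a i) \<oplus> (\<Oplus>i\<in>{..<n}. r' i \<otimes> a i)"
proof -
  have "(\<Oplus>i\<in>{..<n}. (r i \<oplus> r' i) \<otimes> a i) = (\<Oplus>i\<in>{..<n}. r i \<otimes> a i \<oplus> r' i \<otimes> a i)"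
    using assms by (intro fsum_cong) (auto simp: l_distr)
  then show ?thesis
    using assms by (simp add: fsum_add)
qed

lemma lincomb_minus:
  fixes n :: nat
  assumes "\<And>i. i < n \<Longrightarrow> a i \<in> carrier R" "\<forall>i<n. r i \<in> carrier R" "\<forall>i<n. r' i \<in> carrier R"
  shows "(\<Oplus>i\<in>{..<n}. (r i \<ominus> r' i) \<otimes> a i) = (\<Oplus>i\<in>{..<n}. r i \<otimes> a i) \<ominus> (\<Oplus>i\<in>{..<n}. r' i \<otimes> a i)"
proof -
  have "(\<Oplus>i\<in>{..<n}. (r i \<ominus> r' i) \<otimes> a i) = (\<Oplus>i\<in>{..<n}. r i \<otimes> a i \<ominus> r' i \<otimes> a i)"
    using assms by (intro fsum_cong) (auto, algebra)
  then show ?thesis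
    using assms by (simp add: fsum_minus)
qed

lemma lincomb_smult:
  fixes n :: nat
  assumes "\<And>i. i < n \<Longrightarrow> a i \<in> carrier R" "\<forall>i<n. r i \<in> carrier R" "c \<in> carrier R"
  shows "(\<Oplus>i\<in>{..<n}. (c \<otimes> r i) \<otimes> a i) = c \<otimes> (\<Oplus>i\<in>{..<n}. r i \<otimes> a i)"
proof -
  have "(\<Oplus>i\<in>{..<n}. (c \<otimes> r i) \<otimes> a i) = (\<Oplus>i\<in>{..<n}. c \<otimes> (r i \<otimes> a i))"
    using assms by (intro fsum_cong) (auto simp: m_assoc)
  then show ?thesis
    using assms by (simp add: fsum_smult)
qed

lemma lincomb_in_ideal:
  fixes n :: nat
  assumes "ideal I R" "\<forall>i<n. r i \<in> carrier R" "\<forall>i<n. y i \<in> I"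
  shows "(\<Oplus>i\<in>{..<n}. r i \<otimes> y i) \<in> I"
proof -
  interpret I: ideal I R by fact
  show ?thesis
    using assms by (intro fsum_mem) (auto intro: I.I_l_closed)
qed

lemma lin_spanE:
  assumes "x \<in> lin_span R n a"
  obtains r where "\<forall>i<n. r i \<in> carrier R" "x = (\<Oplus>i\<in>{..<n}. r i \<otimes> a i)"
  using assms unfolding lin_span_def by blast

lemma lin_spanI:
  assumes "\<forall>i<n. r i \<in> carrier R" "x = (\<Oplus>i\<in>{..<n}. r i \<otimes> a i)"
  shows "x \<in> lin_span R n a"
  using assms unfolding lin_span_def by blast

lemma lin_span_ideal:
  assumes a: "\<And>i. i < n \<Longrightarrow> a i \<in> carrier R"
  shows "ideal (lin_span R n a) R"
proof (rule ideal_by_closure)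
  show "lin_span R n a \<subseteq> carrier R"
    using a unfolding lin_span_def by (auto intro!: fsum_closed)
  show "\<zero> \<in> lin_span R n a"
    by (rule lin_spanI[where r="\<lambda>i. \<zero>"]) (use a fsum_cong[of n "\<lambda>i. \<zero> \<otimes> a i" "\<lambda>i. \<zero>"] in auto)
  show "x \<oplus> y \<in> lin_span R n a" if x: "x \<in> lin_span R n a" and y: "y \<in> lin_span R n a" for x y
  proof -
    obtain r where "\<forall>i<n. r i \<in> carrier R" "x = (\<Oplus>i\<in>{..<n}. r i \<otimes> a i)"
      using x by (rule lin_spanE)
    moreover obtain r' where "\<forall>i<n. r' i \<in> carrier R" "y = (\<Oplus>i\<in>{..<n}. r' i \<otimes> a i)"
      using y by (rule lin_spanE)
    ultimately show ?thesis
      by (intro lin_spanI[where r="\<lambda>i. r i \<oplus> r' i"]) (auto simp: lincomb_add[of n a, OF a])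
  qed
  show "c \<otimes> x \<in> lin_span R n a" if c: "c \<in> carrier R" and x: "x \<in> lin_span R n a" for c x
  proof -
    obtain r where "\<forall>i<n. r i \<in> carrier R" "x = (\<Oplus>i\<in>{..<n}. r i \<otimes> a i)"
      using x by (rule lin_spanE)
    then show ?thesis
      using c by (intro lin_spanI[where r="\<lambda>i. c \<otimes> r i"]) (auto simp: lincomb_smult[of n a, OF a])
  qed
qed

lemma lin_span_subset_carrier:
  assumes "\<And>i. i < n \<Longrightarrow> a i \<in> carrier R"
  shows "lin_span R n a \<subseteq> carrier R"
  using ideal.Icarr[OF lin_span_ideal[of n a]] assms by blast

lemma generator_in_lin_span:
  assumes "\<And>i. i < n \<Longrightarrow> a i \<in> carrier R" "k < n"
  shows "a k \<in> lin_span R n a"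
  using assms fsum_delta[of k n a]
  by (intro lin_spanI[where r="\<lambda>i. if i = k then \<one> else \<zero>"]) auto

lemma lin_span_eq_genideal:
  assumes a: "\<And>i. i < n \<Longrightarrow> a i \<in> carrier R"
  shows "lin_span R n a = Idl (a ` {..<n})"
proof
  show "Idl (a ` {..<n}) \<subseteq> lin_span R n a"
    using lin_span_ideal[of n a, OF a] generator_in_lin_span[of n a, OF a] by (intro genideal_minimal) auto
  have "ideal (Idl (a ` {..<n})) R" "\<forall>i<n. a i \<in> Idl (a ` {..<n})"
    using a genideal_self[of "a ` {..<n}"] by (auto intro!: genideal_ideal)
  then show "lin_span R n a \<subseteq> Idl (a ` {..<n})"
    by (auto elim!: lin_spanE intro!: lincomb_in_ideal)
qed

lemma fg_ideal_iff_lin_span: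
  "fg_ideal R I \<longleftrightarrow> (\<exists>n a. (\<forall>i<n. a i \<in> carrier R) \<and> I = lin_span R n a)"
proof
  assume "fg_ideal R I"
  then obtain X where X: "finite X" "X \<subseteq> carrier R" "I = Idl X"
    unfolding fg_ideal_def by blast
  obtain xs where "set xs = X"
    using finite_list[OF X(1)] by blast
  then have Xxs: "X = (\<lambda>i. xs ! i) ` {..<length xs}"
    by (auto simp: set_conv_nth)
  then have "\<forall>i<length xs. xs ! i \<in> carrier R"
    using X(2) by auto
  moreover have "I = lin_span R (length xs) (\<lambda>i. xs ! i)"
    using calculation X(3) Xxs by (simp add: lin_span_eq_genideal)
  ultimately show "\<exists>n a. (\<forall>i<n. a i \<in> carrier R) \<and> I = lin_span R n a"
    by blast
next
  assume "\<exists>n a. (\<forall>i<n. a i \<in> carrier R) \<and> I = lin_span R n a"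
  then obtain n a where a: "\<forall>i<n. a i \<in> carrier R" and "I = lin_span R n a"
    by blast
  then have "I = Idl (a ` {..<n})"
    by (simp add: lin_span_eq_genideal)
  then show "fg_ideal R I"
    unfolding fg_ideal_def using a by blast
qed

lemma submod_subset: "submod R V N \<Longrightarrow> N \<subseteq> V"
  unfolding submod_def by blast

lemma submod_zero: "submod R V N \<Longrightarrow> \<zero> \<in> N"
  unfolding submod_def by blast

lemma submod_add: "submod R V N \<Longrightarrow> x \<in> N \<Longrightarrow> y \<in> N \<Longrightarrow> x \<oplus> y \<in> N"
  unfolding submod_def by blast

lemma submod_neg: "submod R V N \<Longrightarrow> x \<in> N \<Longrightarrow> \<ominus> x \<in> N"
  unfolding submod_def by blast

lemma submod_smult: "submod R V N \<Longrightarrow> r \<in> carrier R \<Longrightarrow> x \<in> N \<Longrightarrow> r \<otimes> x \<in> N"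
  unfolding submod_def by blast

context
  fixes V N
  assumes N: "submod R V N" and V: "V \<subseteq> carrier R"
begin

lemma submod_subset_carrier: "N \<subseteq> carrier R"
  using submod_subset[OF N] V by blast

lemma submod_abelian_subgroup: "abelian_subgroup N R"
proof (rule abelian_subgroupI3)
  have "subgroup N (add_monoid R)"
    using N submod_subset_carrier
    by (intro add.subgroupI) (auto simp: submod_def a_inv_def[symmetric])
  then show "additive_subgroup N R"
    by (rule additive_subgroupI)
qed (rule abelian_group_axioms)

lemma submod_coset_eq_iff:
  assumes "x \<in> carrier R" "y \<in> carrier R"
  shows "N +> x = N +> y \<longleftrightarrow> x \<ominus> y \<in> N"
proof -
  interpret N: abelian_subgroup N R
    by (rule submod_abelian_subgroup)
  have "N +> x = N +> y \<longleftrightarrow> x \<in> N +> y"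
    using assms N.a_repr_independenceD[of x y] N.a_repr_independence'[of x y] by auto
  also have "\<dots> \<longleftrightarrow> x \<ominus> y \<in> N"
    using assms by (intro N.a_rcos_module_minus ring_axioms)
  finally show ?thesis .
qed

lemma submod_coset_add:
  assumes "x \<in> carrier R" "y \<in> carrier R"
  shows "(N +> x) <+> (N +> y) = N +> (x \<oplus> y)"
  using abelian_subgroup.a_rcos_sum[OF submod_abelian_subgroup assms] .

lemma submod_coset_smult:
  assumes "x \<in> carrier R" "c \<in> carrier R"
  shows "quot_smult R N c (N +> x) = N +> (c \<otimes> x)"
proof
  have Nc: "N \<subseteq> carrier R" by (rule submod_subset_carrier)
  show "quot_smult R N c (N +> x) \<subseteq> N +> (c \<otimes> x)"
  proof
    fix w assume "w \<in> quot_smult R N c (N +> x)"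
    then obtain h k where hk: "h \<in> N" "k \<in> N" "w = h \<oplus> c \<otimes> (k \<oplus> x)"
      unfolding quot_smult_def set_add_def' a_r_coset_def' by auto
    moreover have "h \<in> carrier R" "k \<in> carrier R"
      using hk Nc by auto
    ultimately have "w = (h \<oplus> c \<otimes> k) \<oplus> c \<otimes> x"
      using assms by algebra
    then show "w \<in> N +> (c \<otimes> x)"
      using hk submod_add[OF N] submod_smult[OF N] assms unfolding a_r_coset_def' by auto
  qed
  show "N +> (c \<otimes> x) \<subseteq> quot_smult R N c (N +> x)"
  proof
    fix w assume "w \<in> N +> (c \<otimes> x)"
    then obtain h where h: "h \<in> N" "w = h \<oplus> c \<otimes> (\<zero> \<oplus> x)"
      using assms unfolding a_r_coset_def' by auto
    then show "w \<in> quot_smult R N c (N +> x)"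
      using submod_zero[OF N] unfolding quot_smult_def set_add_def' a_r_coset_def' by blast
  qed
qed

end

section \<open>Quasi-projectivity of a finitely generated ideal\<close>

context
  fixes n :: nat and a :: "nat \<Rightarrow> 'a"
  assumes a: "\<And>i. i < n \<Longrightarrow> a i \<in> carrier R"
begin

lemma
  assumes "v \<in> lin_span R n a"
  shows lin_coeffs_carrier: "\<forall>i<n. lin_coeffs R n a v i \<in> carrier R"
    and lincomb_lin_coeffs: "v = (\<Oplus>i\<in>{..<n}. lin_coeffs R n a v i \<otimes> a i)"
proof -
  have "\<exists>r. (\<forall>i<n. r i \<in> carrier R) \<and> v = (\<Oplus>i\<in>{..<n}. r i \<otimes> a i)"
    using assms by (blast elim: lin_spanE)
  from someI_ex[OF this] show "\<forall>i<n. lin_coeffs R n a v i \<in> carrier R"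
    and "v = (\<Oplus>i\<in>{..<n}. lin_coeffs R n a v i \<otimes> a i)"
    unfolding lin_coeffs_def by auto
qed

lemma respects_relations_lincomb_diff:
  assumes y: "\<And>i. i < n \<Longrightarrow> y i \<in> carrier R" and "respects_relations R n a N y"
    and r: "\<forall>i<n. r i \<in> carrier R" and r': "\<forall>i<n. r' i \<in> carrier R"
    and eq: "(\<Oplus>i\<in>{..<n}. r i \<otimes> a i) = (\<Oplus>i\<in>{..<n}. r' i \<otimes> a i)"
  shows "(\<Oplus>i\<in>{..<n}. r i \<otimes> y i) \<ominus> (\<Oplus>i\<in>{..<n}. r' i \<otimes> y i) \<in> N"
proof -
  have "is_relation R n a (\<lambda>i. r i \<ominus> r' i)"
    unfolding is_relation_def using lincomb_minus[of n a, OF a r r'] eq r r' a by (auto simp: fsum_closed)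
  then show ?thesis
    using assms lincomb_minus[OF y r r'] unfolding respects_relations_def by auto
qed

lemma lin_ext_lincomb:
  assumes y: "\<And>i. i < n \<Longrightarrow> y i \<in> carrier R" and resp: "respects_relations R n a N y"
    and r: "\<forall>i<n. r i \<in> carrier R"
  shows "lin_ext R n a y (\<Oplus>i\<in>{..<n}. r i \<otimes> a i) \<ominus> (\<Oplus>i\<in>{..<n}. r i \<otimes> y i) \<in> N"
proof -
  let ?v = "\<Oplus>i\<in>{..<n}. r i \<otimes> a i"
  have "?v \<in> lin_span R n a"
    using r by (intro lin_spanI) auto
  then show ?thesis
    unfolding lin_ext_def
    by (intro respects_relations_lincomb_diff[OF y resp _ r])
      (simp_all add: lin_coeffs_carrier flip: lincomb_lin_coeffs)
qed

lemma lin_ext_generator: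
  assumes y: "\<And>i. i < n \<Longrightarrow> y i \<in> carrier R" and "respects_relations R n a N y" and k: "k < n"
  shows "lin_ext R n a y (a k) \<ominus> y k \<in> N"
  using lin_ext_lincomb[OF assms(1,2), of "\<lambda>i. if i = k then \<one> else \<zero>"]
  by (simp add: fsum_delta[OF k a] fsum_delta[OF k y])

lemma lin_ext_closed:
  assumes "\<forall>i<n. y i \<in> lin_span R n a" "v \<in> lin_span R n a"
  shows "lin_ext R n a y v \<in> lin_span R n a"
  unfolding lin_ext_def
  using assms lin_span_ideal[of n a, OF a] lin_coeffs_carrier by (intro lincomb_in_ideal) auto

lemma lin_ext_add:
  assumes y: "\<And>i. i < n \<Longrightarrow> y i \<in> carrier R" and resp: "respects_relations R n a N y"
    and u: "u \<in> lin_span R n a" and v: "v \<in> lin_span R n a"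
  shows "lin_ext R n a y (u \<oplus> v) \<ominus> (lin_ext R n a y u \<oplus> lin_ext R n a y v) \<in> N"
proof -
  let ?r = "lin_coeffs R n a u" and ?r' = "lin_coeffs R n a v"
  have r: "\<forall>i<n. ?r i \<in> carrier R" "\<forall>i<n. ?r' i \<in> carrier R"
    using lin_coeffs_carrier[OF u] lin_coeffs_carrier[OF v] by auto
  then have "u \<oplus> v = (\<Oplus>i\<in>{..<n}. (?r i \<oplus> ?r' i) \<otimes> a i)"
    using lincomb_add[of n a, OF a] lincomb_lin_coeffs[OF u] lincomb_lin_coeffs[OF v] by simp
  moreover have "(\<Oplus>i\<in>{..<n}. (?r i \<oplus> ?r' i) \<otimes> y i) = lin_ext R n a y u \<oplus> lin_ext R n a y v"
    unfolding lin_ext_def using lincomb_add[OF y] r by simp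
  ultimately show ?thesis
    using lin_ext_lincomb[OF y resp, of "\<lambda>i. ?r i \<oplus> ?r' i"] r by simp
qed

lemma lin_ext_smult:
  assumes y: "\<And>i. i < n \<Longrightarrow> y i \<in> carrier R" and resp: "respects_relations R n a N y"
    and c: "c \<in> carrier R" and v: "v \<in> lin_span R n a"
  shows "lin_ext R n a y (c \<otimes> v) \<ominus> c \<otimes> lin_ext R n a y v \<in> N"
proof -
  let ?r = "lin_coeffs R n a v"
  have r: "\<forall>i<n. ?r i \<in> carrier R"
    using v by (rule lin_coeffs_carrier)
  then have "c \<otimes> v = (\<Oplus>i\<in>{..<n}. (c \<otimes> ?r i) \<otimes> a i)"
    using lincomb_smult[of n a, OF a r c] lincomb_lin_coeffs[OF v] by simp
  moreover have "(\<Oplus>i\<in>{..<n}. (c \<otimes> ?r i) \<otimes> y i) = c \<otimes> lin_ext R n a y v"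
    unfolding lin_ext_def using lincomb_smult[OF y r c] by simp
  ultimately show ?thesis
    using lin_ext_lincomb[OF y resp, of "\<lambda>i. c \<otimes> ?r i"] r c by simp
qed

lemma lin_map_lin_ext:
  assumes y: "\<forall>i<n. y i \<in> lin_span R n a" and resp: "respects_relations R n a {\<zero>} y"
  shows "lin_map R (lin_span R n a) (lin_span R n a) (lin_ext R n a y)"
proof -
  have yc: "\<And>i. i < n \<Longrightarrow> y i \<in> carrier R"
    using y lin_span_subset_carrier[of n a, OF a] by blast
  have ext: "lin_ext R n a y v \<in> carrier R" if "v \<in> lin_span R n a" for v
    using lin_ext_closed[OF y that] lin_span_subset_carrier[of n a, OF a] by blast
  interpret V: ideal "lin_span R n a" R
    by (rule lin_span_ideal[of n a, OF a])
  show ?thesis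
    unfolding lin_map_def
  proof (intro conjI ballI)
    fix u v assume uv: "u \<in> lin_span R n a" "v \<in> lin_span R n a"
    have "lin_ext R n a y (u \<oplus> v) \<in> carrier R"
      "lin_ext R n a y u \<oplus> lin_ext R n a y v \<in> carrier R"
      using uv ext V.a_closed by auto
    then show "lin_ext R n a y (u \<oplus> v) = lin_ext R n a y u \<oplus> lin_ext R n a y v"
      using lin_ext_add[OF yc resp uv] by simp
  next
    fix c v assume cv: "c \<in> carrier R" "v \<in> lin_span R n a"
    have "lin_ext R n a y (c \<otimes> v) \<in> carrier R" "c \<otimes> lin_ext R n a y v \<in> carrier R"
      using cv ext V.I_l_closed by auto
    then show "lin_ext R n a y (c \<otimes> v) = c \<otimes> lin_ext R n a y v"
      using lin_ext_smult[OF yc resp cv] by simp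
  qed (rule lin_ext_closed[OF y])
qed

lemma lin_map_quot_lin_ext:
  assumes N: "submod R (lin_span R n a) N" and y: "\<forall>i<n. y i \<in> lin_span R n a"
    and resp: "respects_relations R n a N y"
  shows "lin_map_quot R (lin_span R n a) N (\<lambda>v. N +> lin_ext R n a y v)"
proof -
  let ?V = "lin_span R n a"
  have V: "?V \<subseteq> carrier R"
    by (rule lin_span_subset_carrier[of n a, OF a])
  have yc: "\<And>i. i < n \<Longrightarrow> y i \<in> carrier R"
    using y V by blast
  have ext: "lin_ext R n a y v \<in> carrier R" if "v \<in> ?V" for v
    using lin_ext_closed[OF y that] V by blast
  interpret V: ideal ?V R
    by (rule lin_span_ideal[of n a, OF a])
  show ?thesis
    unfolding lin_map_quot_def
  proof (intro conjI ballI)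
    fix v assume "v \<in> ?V"
    then show "N +> lin_ext R n a y v \<in> quot_carrier R ?V N"
      unfolding quot_carrier_def using lin_ext_closed[OF y] by blast
  next
    fix u v assume uv: "u \<in> ?V" "v \<in> ?V"
    have ext_uv: "lin_ext R n a y u \<in> carrier R" "lin_ext R n a y v \<in> carrier R"
      "lin_ext R n a y (u \<oplus> v) \<in> carrier R"
      using uv ext V.a_closed by auto
    have "N +> lin_ext R n a y (u \<oplus> v) = N +> (lin_ext R n a y u \<oplus> lin_ext R n a y v)"
      using lin_ext_add[OF yc resp uv] ext_uv submod_coset_eq_iff[OF N V] by blast
    also have "\<dots> = (N +> lin_ext R n a y u) <+>\<^bsub>R\<^esub> (N +> lin_ext R n a y v)"
      using submod_coset_add[OF N V ext_uv(1,2)] by simp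
    finally show "N +> lin_ext R n a y (u \<oplus> v) = (N +> lin_ext R n a y u) <+>\<^bsub>R\<^esub> (N +> lin_ext R n a y v)" .
  next
    fix c v assume cv: "c \<in> carrier R" "v \<in> ?V"
    have ext_cv: "lin_ext R n a y v \<in> carrier R" "lin_ext R n a y (c \<otimes> v) \<in> carrier R"
      using cv ext V.I_l_closed by auto
    have "N +> lin_ext R n a y (c \<otimes> v) = N +> (c \<otimes> lin_ext R n a y v)"
      using lin_ext_smult[OF yc resp cv] ext_cv cv(1) submod_coset_eq_iff[OF N V] by blast
    also have "\<dots> = quot_smult R N c (N +> lin_ext R n a y v)"
      using submod_coset_smult[OF N V ext_cv(1) cv(1)] by simp
    finally show "N +> lin_ext R n a y (c \<otimes> v) = quot_smult R N c (N +> lin_ext R n a y v)" .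
  qed
qed

lemma lin_map_lincomb:
  assumes f: "lin_map R (lin_span R n a) (lin_span R n a) f" and r: "\<forall>i<n. r i \<in> carrier R"
  shows "f (\<Oplus>i\<in>{..<n}. r i \<otimes> a i) = (\<Oplus>i\<in>{..<n}. r i \<otimes> f (a i))"
proof -
  let ?V = "lin_span R n a"
  interpret V: ideal ?V R
    by (rule lin_span_ideal[of n a, OF a])
  have aV: "\<And>i. i < n \<Longrightarrow> a i \<in> ?V"
    by (rule generator_in_lin_span[of n a, OF a])
  have fa: "\<And>i. i < n \<Longrightarrow> f (a i) \<in> carrier R"
    using f aV V.Icarr unfolding lin_map_def by blast
  have "f (\<Oplus>i\<in>{..<k}. r i \<otimes> a i) = (\<Oplus>i\<in>{..<k}. r i \<otimes> f (a i))" if "k \<le> n" for k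
    using that
  proof (induction k)
    case 0
    have "f (\<zero> \<otimes> \<zero>) = \<zero> \<otimes> f \<zero>" "f \<zero> \<in> carrier R"
      using f V.zero_closed V.Icarr unfolding lin_map_def by (blast, blast)
    then show ?case
      by simp
  next
    case (Suc k)
    then have k: "k < n"
      by simp
    let ?s = "\<Oplus>i\<in>{..<k}. r i \<otimes> a i"
    have s: "?s \<in> ?V" and rak: "r k \<otimes> a k \<in> ?V"
      using k r aV by (auto intro: lincomb_in_ideal[OF V.is_ideal] V.I_l_closed)
    have "(\<Oplus>i\<in>{..<Suc k}. r i \<otimes> a i) = r k \<otimes> a k \<oplus> ?s"
      using k r a by (intro fsum_Suc) auto
    then have "f (\<Oplus>i\<in>{..<Suc k}. r i \<otimes> a i) = r k \<otimes> f (a k) \<oplus> f ?s"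
      using f s rak k r aV unfolding lin_map_def by simp
    also have "\<dots> = (\<Oplus>i\<in>{..<Suc k}. r i \<otimes> f (a i))"
      using Suc.IH k r fa by (simp add: fsum_Suc)
    finally show ?case .
  qed
  then show ?thesis
    by simp
qed

lemma lin_map_quot_lincomb:
  assumes N: "submod R (lin_span R n a) N" and g: "lin_map_quot R (lin_span R n a) N g"
    and y: "\<And>i. i < n \<Longrightarrow> y i \<in> carrier R" and gy: "\<And>i. i < n \<Longrightarrow> g (a i) = N +> y i"
    and r: "\<forall>i<n. r i \<in> carrier R"
  shows "g (\<Oplus>i\<in>{..<n}. r i \<otimes> a i) = N +> (\<Oplus>i\<in>{..<n}. r i \<otimes> y i)"
proof -
  let ?V = "lin_span R n a"
  interpret V: ideal ?V R
    by (rule lin_span_ideal[of n a, OF a])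
  have V: "?V \<subseteq> carrier R"
    by (rule lin_span_subset_carrier[of n a, OF a])
  have aV: "\<And>i. i < n \<Longrightarrow> a i \<in> ?V"
    by (rule generator_in_lin_span[of n a, OF a])
  have "g (\<Oplus>i\<in>{..<k}. r i \<otimes> a i) = N +> (\<Oplus>i\<in>{..<k}. r i \<otimes> y i)" if "k \<le> n" for k
    using that
  proof (induction k)
    case 0
    obtain w where w: "w \<in> ?V" "g \<zero> = N +> w"
      using g V.zero_closed unfolding lin_map_quot_def quot_carrier_def by blast
    have "g (\<zero> \<otimes> \<zero>) = quot_smult R N \<zero> (g \<zero>)"
      using g V.zero_closed unfolding lin_map_quot_def by blast
    also have "\<dots> = N +> \<zero>"
      using w V submod_coset_smult[OF N V, of w \<zero>] by auto
    finally show ?case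
      by simp
  next
    case (Suc k)
    then have k: "k < n"
      by simp
    let ?s = "\<Oplus>i\<in>{..<k}. r i \<otimes> a i"
    have s: "?s \<in> ?V" and rak: "r k \<otimes> a k \<in> ?V"
      using k r aV by (auto intro: lincomb_in_ideal[OF V.is_ideal] V.I_l_closed)
    have "(\<Oplus>i\<in>{..<Suc k}. r i \<otimes> a i) = r k \<otimes> a k \<oplus> ?s"
      using k r a by (intro fsum_Suc) auto
    then have "g (\<Oplus>i\<in>{..<Suc k}. r i \<otimes> a i) = quot_smult R N (r k) (g (a k)) <+> g ?s"
      using g s rak k r aV unfolding lin_map_quot_def by simp
    also have "\<dots> = N +> (r k \<otimes> y k \<oplus> (\<Oplus>i\<in>{..<k}. r i \<otimes> y i))"
      using Suc.IH k r y gy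
      by (simp add: submod_coset_smult[OF N V] submod_coset_add[OF N V] fsum_closed)
    also have "\<dots> = N +> (\<Oplus>i\<in>{..<Suc k}. r i \<otimes> y i)"
      using k r y by (simp add: fsum_Suc)
    finally show ?case .
  qed
  then show ?thesis
    by simp
qed

lemma lin_map_respects_relations:
  assumes f: "lin_map R (lin_span R n a) (lin_span R n a) f"
  shows "respects_relations R n a {\<zero>} (\<lambda>i. f (a i))"
  unfolding respects_relations_def is_relation_def
proof (intro allI impI, elim conjE)
  interpret V: ideal "lin_span R n a" R
    by (rule lin_span_ideal[of n a, OF a])
  fix r assume r: "\<forall>i<n. r i \<in> carrier R" and rel: "(\<Oplus>i\<in>{..<n}. r i \<otimes> a i) = \<zero>"
  have "f (\<zero> \<otimes> \<zero>) = \<zero> \<otimes> f \<zero>" "f \<zero> \<in> carrier R"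
    using f V.zero_closed V.Icarr unfolding lin_map_def by (blast, blast)
  then show "(\<Oplus>i\<in>{..<n}. r i \<otimes> f (a i)) \<in> {\<zero>}"
    using lin_map_lincomb[OF f r] rel by simp
qed

lemma lin_map_quot_respects_relations:
  assumes N: "submod R (lin_span R n a) N" and g: "lin_map_quot R (lin_span R n a) N g"
    and y: "\<And>i. i < n \<Longrightarrow> y i \<in> carrier R" and gy: "\<And>i. i < n \<Longrightarrow> g (a i) = N +> y i"
  shows "respects_relations R n a N y"
  unfolding respects_relations_def is_relation_def
proof (intro allI impI, elim conjE)
  have V: "lin_span R n a \<subseteq> carrier R"
    by (rule lin_span_subset_carrier[of n a, OF a])
  fix r assume r: "\<forall>i<n. r i \<in> carrier R" and rel: "(\<Oplus>i\<in>{..<n}. r i \<otimes> a i) = \<zero>"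
  have "(\<Oplus>i\<in>{..<n}. \<zero> \<otimes> a i) = \<zero>" "(\<Oplus>i\<in>{..<n}. \<zero> \<otimes> y i) = \<zero>"
    using a y fsum_cong[of n "\<lambda>i. \<zero> \<otimes> a i" "\<lambda>i. \<zero>"]
      fsum_cong[of n "\<lambda>i. \<zero> \<otimes> y i" "\<lambda>i. \<zero>"] by auto
  then have "g \<zero> = N +> \<zero>"
    using lin_map_quot_lincomb[OF N g y gy, of "\<lambda>i. \<zero>"] by simp
  then have "N +> (\<Oplus>i\<in>{..<n}. r i \<otimes> y i) = N +> \<zero>"
    using lin_map_quot_lincomb[OF N g y gy r] rel by simp
  moreover have "(\<Oplus>i\<in>{..<n}. r i \<otimes> y i) \<in> carrier R"
    using r y by (simp add: fsum_closed)
  ultimately show "(\<Oplus>i\<in>{..<n}. r i \<otimes> y i) \<in> N"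
    using submod_coset_eq_iff[OF N V] by (simp add: a_minus_def)
qed

lemma lin_ext_congruent:
  assumes N: "submod R (lin_span R n a) N" and v: "v \<in> lin_span R n a"
    and y: "\<And>i. i < n \<Longrightarrow> y i \<in> carrier R" and z: "\<And>i. i < n \<Longrightarrow> z i \<in> carrier R"
    and zy: "\<forall>i<n. z i \<ominus> y i \<in> N"
  shows "lin_ext R n a z v \<ominus> lin_ext R n a y v \<in> N"
proof -
  let ?r = "lin_coeffs R n a v"
  have r: "\<forall>i<n. ?r i \<in> carrier R"
    using v by (rule lin_coeffs_carrier)
  have "lin_ext R n a z v \<ominus> lin_ext R n a y v = (\<Oplus>i\<in>{..<n}. ?r i \<otimes> z i \<ominus> ?r i \<otimes> y i)"
    unfolding lin_ext_def using r z y by (intro fsum_minus[symmetric]) auto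
  also have "\<dots> = (\<Oplus>i\<in>{..<n}. ?r i \<otimes> (z i \<ominus> y i))"
    using r z y by (intro fsum_cong) (auto simp: r_minus a_minus_def r_distr)
  also have "\<dots> \<in> N"
    using r zy submod_smult[OF N] submod_add[OF N] submod_zero[OF N]
      submod_subset_carrier[OF N lin_span_subset_carrier[of n a, OF a]] by (intro fsum_mem) auto
  finally show ?thesis .
qed

lemma relation_lifting_if_quasi_projective:
  assumes qp: "quasi_projective R (lin_span R n a)"
  shows "relation_lifting R n a"
  unfolding relation_lifting_def
proof (intro allI impI, elim conjE)
  let ?V = "lin_span R n a"
  interpret V: ideal ?V R
    by (rule lin_span_ideal[of n a, OF a])
  have aV: "\<And>i. i < n \<Longrightarrow> a i \<in> ?V"
    by (rule generator_in_lin_span[of n a, OF a])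
  fix N y
  assume N: "submod R ?V N" and y: "\<forall>i<n. y i \<in> ?V" and resp: "respects_relations R n a N y"
  have yc: "\<And>i. i < n \<Longrightarrow> y i \<in> carrier R"
    using y V.Icarr by blast
  obtain f where f: "lin_map R ?V ?V f" "\<forall>v\<in>?V. N +> f v = N +> lin_ext R n a y v"
    using qp[unfolded quasi_projective_def, rule_format, OF conjI[OF N lin_map_quot_lin_ext[OF N y resp]]]
    by blast
  have fa: "\<And>i. i < n \<Longrightarrow> f (a i) \<in> ?V"
    using f(1) aV unfolding lin_map_def by blast
  have "f (a k) \<ominus> y k \<in> N" if k: "k < n" for k
  proof -
    have "lin_ext R n a y (a k) \<in> carrier R" "f (a k) \<in> carrier R"
      using lin_ext_closed[OF y aV[OF k]] fa[OF k] V.Icarr by auto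
    then have "N +> lin_ext R n a y (a k) = N +> y k"
      using lin_ext_generator[OF yc resp k] submod_coset_eq_iff[OF N V.a_subset _ yc[OF k]]
      by simp
    then have "N +> f (a k) = N +> y k"
      using f(2) aV[OF k] by simp
    then show ?thesis
      using submod_coset_eq_iff[OF N V.a_subset _ yc[OF k]] fa[OF k] V.Icarr by simp
  qed
  then show "\<exists>z. (\<forall>i<n. z i \<in> ?V) \<and> (\<forall>i<n. z i \<ominus> y i \<in> N) \<and> respects_relations R n a {\<zero>} z"
    using fa lin_map_respects_relations[OF f(1)] by (intro exI[of _ "\<lambda>i. f (a i)"]) auto
qed

lemma quasi_projective_if_relation_lifting:
  assumes lift: "relation_lifting R n a"
  shows "quasi_projective R (lin_span R n a)"
  unfolding quasi_projective_def
proof (intro allI impI, elim conjE)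
  let ?V = "lin_span R n a"
  interpret V: ideal ?V R
    by (rule lin_span_ideal[of n a, OF a])
  fix N g assume N: "submod R ?V N" and g: "lin_map_quot R ?V N g"
  have "\<forall>i. \<exists>w. i < n \<longrightarrow> w \<in> ?V \<and> g (a i) = N +> w"
    using g generator_in_lin_span[of n a, OF a] unfolding lin_map_quot_def quot_carrier_def by blast
  then obtain y where y: "\<forall>i<n. y i \<in> ?V" and gy: "\<And>i. i < n \<Longrightarrow> g (a i) = N +> y i"
    by metis
  have yc: "\<And>i. i < n \<Longrightarrow> y i \<in> carrier R"
    using y V.Icarr by blast
  obtain z where z: "\<forall>i<n. z i \<in> ?V" "\<forall>i<n. z i \<ominus> y i \<in> N" "respects_relations R n a {\<zero>} z"
    using lift[unfolded relation_lifting_def, rule_format,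
        OF conjI[OF N conjI[OF y lin_map_quot_respects_relations[OF N g yc gy]]]]
    by blast
  have zc: "\<And>i. i < n \<Longrightarrow> z i \<in> carrier R"
    using z(1) V.Icarr by blast
  have "N +> lin_ext R n a z v = g v" if v: "v \<in> ?V" for v
  proof -
    have "N +> lin_ext R n a z v = N +> lin_ext R n a y v"
      using lin_ext_congruent[OF N v yc zc z(2)] lin_ext_closed[OF z(1) v] lin_ext_closed[OF y v]
        V.Icarr submod_coset_eq_iff[OF N V.a_subset] by simp
    also have "\<dots> = g v"
      unfolding lin_ext_def
      using lin_map_quot_lincomb[OF N g yc gy lin_coeffs_carrier[OF v]] lincomb_lin_coeffs[OF v] by simp
    finally show ?thesis .
  qed
  then show "\<exists>f. lin_map R ?V ?V f \<and> (\<forall>v\<in>?V. N +> f v = g v)"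
    using lin_map_lin_ext[OF z(1,3)] by (intro exI[of _ "lin_ext R n a z"]) auto
qed

theorem quasi_projective_iff_relation_lifting:
  "quasi_projective R (lin_span R n a) \<longleftrightarrow> relation_lifting R n a"
  using relation_lifting_if_quasi_projective quasi_projective_if_relation_lifting by blast

lemma relation_lifting_if_fqp_ring:
  assumes "fqp_ring R"
  shows "relation_lifting R n a"
proof -
  have "fg_ideal R (lin_span R n a)"
    unfolding fg_ideal_iff_lin_span using a by (intro exI[of _ n] exI[of _ a]) auto
  then have "quasi_projective R (lin_span R n a)"
    using assms lin_span_ideal[of n a, OF a] unfolding fqp_ring_def by simp
  then show ?thesis
    by (rule relation_lifting_if_quasi_projective)
qed

end

end

context cring
begin

lemma lin_span_subset_ideal:
  assumes "ideal I R" "\<forall>i<n. b i \<in> I"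
  shows "lin_span R n b \<subseteq> I"
  using assms by (auto elim!: lin_spanE intro!: lincomb_in_ideal)

lemma lin_span_cong:
  assumes "\<And>i. i < n \<Longrightarrow> a i = b i" "\<And>i. i < n \<Longrightarrow> b i \<in> carrier R"
  shows "lin_span R n a = lin_span R n b"
proof -
  have eq: "(\<Oplus>i\<in>{..<n}. r i \<otimes> a i) = (\<Oplus>i\<in>{..<n}. r i \<otimes> b i)" if "\<forall>i<n. r i \<in> carrier R" for r
    using that assms by (intro fsum_cong) auto
  show ?thesis
  proof (intro equalityI subsetI)
    fix x assume "x \<in> lin_span R n a"
    then obtain r where "\<forall>i<n. r i \<in> carrier R" "x = (\<Oplus>i\<in>{..<n}. r i \<otimes> a i)"
      by (rule lin_spanE)
    then show "x \<in> lin_span R n b"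
      using eq by (intro lin_spanI) auto
  next
    fix x assume "x \<in> lin_span R n b"
    then obtain r where "\<forall>i<n. r i \<in> carrier R" "x = (\<Oplus>i\<in>{..<n}. r i \<otimes> b i)"
      by (rule lin_spanE)
    then show "x \<in> lin_span R n a"
      using eq by (intro lin_spanI) auto
  qed
qed

lemma lin_span_smult_unit:
  assumes a: "\<And>i. i < n \<Longrightarrow> a i \<in> carrier R" and u: "u \<in> carrier R" "v \<in> carrier R" "v \<otimes> u = \<one>"
  shows "lin_span R n (\<lambda>i. u \<otimes> a i) = lin_span R n a"
proof
  have ua: "\<And>i. i < n \<Longrightarrow> u \<otimes> a i \<in> carrier R"
    using a u by auto
  show "lin_span R n (\<lambda>i. u \<otimes> a i) \<subseteq> lin_span R n a"
    using a u generator_in_lin_span[of n a] ideal.I_l_closed[OF lin_span_ideal[of n a]]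
    by (intro lin_span_subset_ideal lin_span_ideal) auto
  have "a i = v \<otimes> (u \<otimes> a i)" if "i < n" for i
    using a[OF that] u by (simp add: m_assoc[symmetric])
  then show "lin_span R n a \<subseteq> lin_span R n (\<lambda>i. u \<otimes> a i)"
    using ua u generator_in_lin_span[of n "\<lambda>i. u \<otimes> a i"]
      ideal.I_l_closed[OF lin_span_ideal[of n "\<lambda>i. u \<otimes> a i"]]
    by (intro lin_span_subset_ideal lin_span_ideal) (auto, metis)
qed

end

section \<open>Localization at a prime ideal\<close>

lemma Union_eq_const: "\<lbrakk>\<And>x. x \<in> A \<Longrightarrow> x = c; A \<noteq> {}\<rbrakk> \<Longrightarrow> \<Union>A = c"
  by blast

locale prime_localization = cring +
  fixes P
  assumes prime: "primeideal P R"
begin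

abbreviation S :: "'a set" where "S \<equiv> carrier R - P"
abbreviation frac :: "'a \<times> 'a \<Rightarrow> ('a \<times> 'a) set" where "frac x \<equiv> loc_cls R P x"
abbreviation L :: "('a \<times> 'a) set ring" where "L \<equiv> localization R P"
abbreviation loc_rel :: "'a \<Rightarrow> 'a \<Rightarrow> 'a \<Rightarrow> 'a \<Rightarrow> bool" where
  "loc_rel a s b t \<equiv> (\<exists>u\<in>S. u \<otimes> ((a \<otimes> t) \<ominus> (b \<otimes> s)) = \<zero>)"

lemma one_in_S: "\<one> \<in> S"
  using prime primeideal.I_notcarr primeideal.axioms(1) ideal.one_imp_carrier by fastforce

lemma S_mult_closed: "s \<in> S \<Longrightarrow> t \<in> S \<Longrightarrow> s \<otimes> t \<in> S"
  using primeideal.I_prime[OF prime] by auto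

lemma loc_rel_refl: "a \<in> carrier R \<Longrightarrow> s \<in> S \<Longrightarrow> loc_rel a s a s"
  using one_in_S by (intro bexI[of _ \<one>]) (auto simp: r_neg a_minus_def)

lemma loc_rel_sym:
  assumes "a \<in> carrier R" "s \<in> S" "b \<in> carrier R" "t \<in> S" "loc_rel a s b t"
  shows "loc_rel b t a s"
proof -
  obtain u where u: "u \<in> S" "u \<otimes> ((a \<otimes> t) \<ominus> (b \<otimes> s)) = \<zero>"
    using assms by blast
  have "a \<in> carrier R" "b \<in> carrier R" "s \<in> carrier R" "t \<in> carrier R" "u \<in> carrier R"
    using assms u by auto
  then have "u \<otimes> ((b \<otimes> s) \<ominus> (a \<otimes> t)) = \<ominus> (u \<otimes> ((a \<otimes> t) \<ominus> (b \<otimes> s)))"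
    by algebra
  then show ?thesis
    using u by auto
qed

lemma loc_rel_trans:
  assumes "a \<in> carrier R" "s \<in> S" "b \<in> carrier R" "t \<in> S" "c \<in> carrier R" "w \<in> S"
    and "loc_rel a s b t" "loc_rel b t c w"
  shows "loc_rel a s c w"
proof -
  obtain u where u: "u \<in> S" "u \<otimes> ((a \<otimes> t) \<ominus> (b \<otimes> s)) = \<zero>"
    using assms by blast
  obtain v where v: "v \<in> S" "v \<otimes> ((b \<otimes> w) \<ominus> (c \<otimes> t)) = \<zero>"
    using assms by blast
  have c: "a \<in> carrier R" "b \<in> carrier R" "c \<in> carrier R" "s \<in> carrier R" "t \<in> carrier R"
    "w \<in> carrier R" "u \<in> carrier R" "v \<in> carrier R"
    using assms u v by auto
  then have "(u \<otimes> v \<otimes> t) \<otimes> ((a \<otimes> w) \<ominus> (c \<otimes> s)) =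
        (v \<otimes> w) \<otimes> (u \<otimes> ((a \<otimes> t) \<ominus> (b \<otimes> s))) \<oplus> (u \<otimes> s) \<otimes> (v \<otimes> ((b \<otimes> w) \<ominus> (c \<otimes> t)))"
    by algebra
  then have "(u \<otimes> v \<otimes> t) \<otimes> ((a \<otimes> w) \<ominus> (c \<otimes> s)) = \<zero>"
    unfolding u(2) v(2) using c by simp
  then show ?thesis
    using S_mult_closed[OF S_mult_closed[OF u(1) v(1)] assms(4)] by blast
qed

lemma frac_mem_iff: "(b, t) \<in> frac (a, s) \<longleftrightarrow> b \<in> carrier R \<and> t \<in> S \<and> loc_rel a s b t"
  unfolding loc_cls_def by simp

lemma frac_self: "a \<in> carrier R \<Longrightarrow> s \<in> S \<Longrightarrow> (a, s) \<in> frac (a, s)"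
  using loc_rel_refl by (simp add: frac_mem_iff)

lemma frac_eq_iff:
  assumes "a \<in> carrier R" "s \<in> S" "b \<in> carrier R" "t \<in> S"
  shows "frac (a, s) = frac (b, t) \<longleftrightarrow> loc_rel a s b t"
proof
  assume "frac (a, s) = frac (b, t)"
  then have "loc_rel b t a s"
    using frac_self[OF assms(1,2)] by (simp add: frac_mem_iff)
  then show "loc_rel a s b t"
    using loc_rel_sym assms by blast
next
  assume e: "loc_rel a s b t"
  have "frac (a, s) \<subseteq> frac (b, t)" "frac (b, t) \<subseteq> frac (a, s)"
    using loc_rel_trans[OF assms(3,4,1,2) _ _ loc_rel_sym[OF assms e]] loc_rel_trans[OF assms _ _ e]
    by (auto simp: frac_mem_iff)
  then show "frac (a, s) = frac (b, t)"
    by blast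
qed

lemma frac_eqI:
  assumes "a \<in> carrier R" "s \<in> S" "b \<in> carrier R" "t \<in> S" "a \<otimes> t = b \<otimes> s"
  shows "frac (a, s) = frac (b, t)"
  using assms one_in_S by (subst frac_eq_iff) (auto intro!: bexI[of _ \<one>] simp: r_neg a_minus_def)

lemma loc_add_frac:
  assumes a: "a \<in> carrier R" "s \<in> S" and b: "b \<in> carrier R" "t \<in> S"
  shows "loc_add R P (frac (a, s)) (frac (b, t)) = frac ((a \<otimes> t) \<oplus> (b \<otimes> s), s \<otimes> t)"
  unfolding loc_add_def
proof (rule Union_eq_const)
  fix X assume "X \<in> {frac ((a' \<otimes> t') \<oplus> (b' \<otimes> s'), s' \<otimes> t') | a' s' b' t'.
      (a', s') \<in> frac (a, s) \<and> (b', t') \<in> frac (b, t)}"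
  then obtain a' s' b' t' where X: "X = frac ((a' \<otimes> t') \<oplus> (b' \<otimes> s'), s' \<otimes> t')"
    and a': "(a', s') \<in> frac (a, s)" and b': "(b', t') \<in> frac (b, t)"
    by blast
  obtain u where u: "u \<in> S" "u \<otimes> ((a \<otimes> s') \<ominus> (a' \<otimes> s)) = \<zero>" "a' \<in> carrier R" "s' \<in> S"
    using a' frac_mem_iff by blast
  obtain v where v: "v \<in> S" "v \<otimes> ((b \<otimes> t') \<ominus> (b' \<otimes> t)) = \<zero>" "b' \<in> carrier R" "t' \<in> S"
    using b' frac_mem_iff by blast
  have c: "a \<in> carrier R" "s \<in> carrier R" "b \<in> carrier R" "t \<in> carrier R" "u \<in> carrier R"
    "v \<in> carrier R" "a' \<in> carrier R" "s' \<in> carrier R" "b' \<in> carrier R" "t' \<in> carrier R"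
    using a b u v by auto
  have "(u \<otimes> v) \<otimes> ((((a' \<otimes> t') \<oplus> (b' \<otimes> s')) \<otimes> (s \<otimes> t)) \<ominus> (((a \<otimes> t) \<oplus> (b \<otimes> s)) \<otimes> (s' \<otimes> t'))) =
      (\<ominus> (v \<otimes> t \<otimes> t')) \<otimes> (u \<otimes> ((a \<otimes> s') \<ominus> (a' \<otimes> s))) \<oplus>
      (\<ominus> (u \<otimes> s \<otimes> s')) \<otimes> (v \<otimes> ((b \<otimes> t') \<ominus> (b' \<otimes> t)))"
    using c by algebra
  also have "\<dots> = \<zero>"
    unfolding u(2) v(2) using c by simp
  finally have "loc_rel ((a' \<otimes> t') \<oplus> (b' \<otimes> s')) (s' \<otimes> t') ((a \<otimes> t) \<oplus> (b \<otimes> s)) (s \<otimes> t)"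
    using S_mult_closed[OF u(1) v(1)] by blast
  then show "X = frac ((a \<otimes> t) \<oplus> (b \<otimes> s), s \<otimes> t)"
    unfolding X using a b u v S_mult_closed by (subst frac_eq_iff) auto
qed (use frac_self a b in blast)

lemma loc_mult_frac:
  assumes a: "a \<in> carrier R" "s \<in> S" and b: "b \<in> carrier R" "t \<in> S"
  shows "loc_mult R P (frac (a, s)) (frac (b, t)) = frac (a \<otimes> b, s \<otimes> t)"
  unfolding loc_mult_def
proof (rule Union_eq_const)
  fix X assume "X \<in> {frac (a' \<otimes> b', s' \<otimes> t') | a' s' b' t'.
      (a', s') \<in> frac (a, s) \<and> (b', t') \<in> frac (b, t)}"
  then obtain a' s' b' t' where X: "X = frac (a' \<otimes> b', s' \<otimes> t')"
    and a': "(a', s') \<in> frac (a, s)" and b': "(b', t') \<in> frac (b, t)"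
    by blast
  obtain u where u: "u \<in> S" "u \<otimes> ((a \<otimes> s') \<ominus> (a' \<otimes> s)) = \<zero>" "a' \<in> carrier R" "s' \<in> S"
    using a' frac_mem_iff by blast
  obtain v where v: "v \<in> S" "v \<otimes> ((b \<otimes> t') \<ominus> (b' \<otimes> t)) = \<zero>" "b' \<in> carrier R" "t' \<in> S"
    using b' frac_mem_iff by blast
  have c: "a \<in> carrier R" "s \<in> carrier R" "b \<in> carrier R" "t \<in> carrier R" "u \<in> carrier R"
    "v \<in> carrier R" "a' \<in> carrier R" "s' \<in> carrier R" "b' \<in> carrier R" "t' \<in> carrier R"
    using a b u v by auto
  have "(u \<otimes> v) \<otimes> (((a' \<otimes> b') \<otimes> (s \<otimes> t)) \<ominus> ((a \<otimes> b) \<otimes> (s' \<otimes> t'))) =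
      (\<ominus> (v \<otimes> b \<otimes> t')) \<otimes> (u \<otimes> ((a \<otimes> s') \<ominus> (a' \<otimes> s))) \<oplus>
      (\<ominus> (u \<otimes> a' \<otimes> s)) \<otimes> (v \<otimes> ((b \<otimes> t') \<ominus> (b' \<otimes> t)))"
    using c by algebra
  also have "\<dots> = \<zero>"
    unfolding u(2) v(2) using c by simp
  finally have "loc_rel (a' \<otimes> b') (s' \<otimes> t') (a \<otimes> b) (s \<otimes> t)"
    using S_mult_closed[OF u(1) v(1)] by blast
  then show "X = frac (a \<otimes> b, s \<otimes> t)"
    unfolding X using a b u v S_mult_closed by (subst frac_eq_iff) auto
qed (use frac_self a b in blast)

lemma loc_carrier_iff: "x \<in> carrier L \<longleftrightarrow> (\<exists>a s. a \<in> carrier R \<and> s \<in> S \<and> x = frac (a, s))"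
  by (auto simp: localization_def)

lemma frac_closed: "a \<in> carrier R \<Longrightarrow> s \<in> S \<Longrightarrow> frac (a, s) \<in> carrier L"
  using loc_carrier_iff by blast

lemma locE:
  assumes "x \<in> carrier L"
  obtains a s where "a \<in> carrier R" "s \<in> S" "x = frac (a, s)"
  using assms loc_carrier_iff by auto

lemma loc_add: "a \<in> carrier R \<Longrightarrow> s \<in> S \<Longrightarrow> b \<in> carrier R \<Longrightarrow> t \<in> S \<Longrightarrow>
    frac (a, s) \<oplus>\<^bsub>L\<^esub> frac (b, t) = frac ((a \<otimes> t) \<oplus> (b \<otimes> s), s \<otimes> t)"
  using loc_add_frac by (simp add: localization_def)

lemma loc_mult: "a \<in> carrier R \<Longrightarrow> s \<in> S \<Longrightarrow> b \<in> carrier R \<Longrightarrow> t \<in> S \<Longrightarrow>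
    frac (a, s) \<otimes>\<^bsub>L\<^esub> frac (b, t) = frac (a \<otimes> b, s \<otimes> t)"
  using loc_mult_frac by (simp add: localization_def)

lemma loc_zero: "\<zero>\<^bsub>L\<^esub> = frac (\<zero>, \<one>)"
  by (simp add: localization_def)

lemma loc_one: "\<one>\<^bsub>L\<^esub> = frac (\<one>, \<one>)"
  by (simp add: localization_def)

lemma localization_abelian_group: "abelian_group L"
proof (rule abelian_groupI)
  fix x y assume "x \<in> carrier L" "y \<in> carrier L"
  then obtain a s b t where ab: "a \<in> carrier R" "s \<in> S" "b \<in> carrier R" "t \<in> S"
    "x = frac (a, s)" "y = frac (b, t)"
    by (metis locE)
  show "x \<oplus>\<^bsub>L\<^esub> y \<in> carrier L"
    using ab loc_add frac_closed S_mult_closed by auto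
  show "x \<oplus>\<^bsub>L\<^esub> y = y \<oplus>\<^bsub>L\<^esub> x"
    using ab by (simp add: loc_add a_comm m_comm)
next
  show "\<zero>\<^bsub>L\<^esub> \<in> carrier L"
    using loc_zero frac_closed one_in_S by auto
next
  fix x y z assume "x \<in> carrier L" "y \<in> carrier L" "z \<in> carrier L"
  then obtain a s b t c w where ab: "a \<in> carrier R" "s \<in> S" "b \<in> carrier R" "t \<in> S"
    "c \<in> carrier R" "w \<in> S" "x = frac (a, s)" "y = frac (b, t)" "z = frac (c, w)"
    by (metis locE)
  have "((a \<otimes> t) \<oplus> (b \<otimes> s)) \<otimes> w \<oplus> c \<otimes> (s \<otimes> t) = a \<otimes> (t \<otimes> w) \<oplus> ((b \<otimes> w) \<oplus> (c \<otimes> t)) \<otimes> s"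
    "(s \<otimes> t) \<otimes> w = s \<otimes> (t \<otimes> w)"
    using ab by (simp_all, algebra+)
  then show "(x \<oplus>\<^bsub>L\<^esub> y) \<oplus>\<^bsub>L\<^esub> z = x \<oplus>\<^bsub>L\<^esub> (y \<oplus>\<^bsub>L\<^esub> z)"
    using ab S_mult_closed by (simp add: loc_add)
next
  fix x assume "x \<in> carrier L"
  then obtain a s where ab: "a \<in> carrier R" "s \<in> S" "x = frac (a, s)"
    by (metis locE)
  show "\<zero>\<^bsub>L\<^esub> \<oplus>\<^bsub>L\<^esub> x = x"
    using ab one_in_S by (simp add: loc_zero loc_add)
  have "frac (\<ominus> a, s) \<oplus>\<^bsub>L\<^esub> x = frac ((\<ominus> a \<otimes> s) \<oplus> (a \<otimes> s), s \<otimes> s)"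
    using ab by (simp add: loc_add)
  also have "\<dots> = frac (\<zero>, \<one>)"
    using ab one_in_S S_mult_closed by (intro frac_eqI) (auto, algebra)
  finally show "\<exists>y\<in>carrier L. y \<oplus>\<^bsub>L\<^esub> x = \<zero>\<^bsub>L\<^esub>"
    using frac_closed ab by (auto simp: loc_zero)
qed

lemma localization_comm_monoid: "comm_monoid L"
proof (rule comm_monoidI)
  fix x y assume "x \<in> carrier L" "y \<in> carrier L"
  then obtain a s b t where ab: "a \<in> carrier R" "s \<in> S" "b \<in> carrier R" "t \<in> S"
    "x = frac (a, s)" "y = frac (b, t)"
    by (metis locE)
  show "x \<otimes>\<^bsub>L\<^esub> y \<in> carrier L"
    using ab loc_mult frac_closed S_mult_closed by auto
  show "x \<otimes>\<^bsub>L\<^esub> y = y \<otimes>\<^bsub>L\<^esub> x"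
    using ab by (simp add: loc_mult m_comm)
next
  show "\<one>\<^bsub>L\<^esub> \<in> carrier L"
    using loc_one frac_closed one_in_S by auto
next
  fix x y z assume "x \<in> carrier L" "y \<in> carrier L" "z \<in> carrier L"
  then obtain a s b t c w where ab: "a \<in> carrier R" "s \<in> S" "b \<in> carrier R" "t \<in> S"
    "c \<in> carrier R" "w \<in> S" "x = frac (a, s)" "y = frac (b, t)" "z = frac (c, w)"
    by (metis locE)
  show "(x \<otimes>\<^bsub>L\<^esub> y) \<otimes>\<^bsub>L\<^esub> z = x \<otimes>\<^bsub>L\<^esub> (y \<otimes>\<^bsub>L\<^esub> z)"
    using ab S_mult_closed by (simp add: loc_mult m_assoc)
next
  fix x assume "x \<in> carrier L"
  then obtain a s where ab: "a \<in> carrier R" "s \<in> S" "x = frac (a, s)"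
    by (metis locE)
  show "\<one>\<^bsub>L\<^esub> \<otimes>\<^bsub>L\<^esub> x = x"
    using ab one_in_S by (simp add: loc_one loc_mult)
qed

lemma localization_cring: "cring L"
proof (rule cringI[OF localization_abelian_group localization_comm_monoid])
  fix x y z assume "x \<in> carrier L" "y \<in> carrier L" "z \<in> carrier L"
  then obtain a s b t c w where ab: "a \<in> carrier R" "s \<in> S" "b \<in> carrier R" "t \<in> S"
    "c \<in> carrier R" "w \<in> S" "x = frac (a, s)" "y = frac (b, t)" "z = frac (c, w)"
    by (metis locE)
  have "(x \<oplus>\<^bsub>L\<^esub> y) \<otimes>\<^bsub>L\<^esub> z = frac (((a \<otimes> t) \<oplus> (b \<otimes> s)) \<otimes> c, (s \<otimes> t) \<otimes> w)"
    using ab S_mult_closed by (simp add: loc_add loc_mult)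
  also have "\<dots> = frac (((a \<otimes> c) \<otimes> (t \<otimes> w)) \<oplus> ((b \<otimes> c) \<otimes> (s \<otimes> w)), (s \<otimes> w) \<otimes> (t \<otimes> w))"
    using ab S_mult_closed by (intro frac_eqI) (auto, algebra)
  also have "\<dots> = x \<otimes>\<^bsub>L\<^esub> z \<oplus>\<^bsub>L\<^esub> y \<otimes>\<^bsub>L\<^esub> z"
    using ab S_mult_closed by (simp add: loc_add loc_mult)
  finally show "(x \<oplus>\<^bsub>L\<^esub> y) \<otimes>\<^bsub>L\<^esub> z = x \<otimes>\<^bsub>L\<^esub> z \<oplus>\<^bsub>L\<^esub> y \<otimes>\<^bsub>L\<^esub> z" .
qed

sublocale Loc: cring L
  by (rule localization_cring)

lemma frac_eq_zero_iff:
  assumes "a \<in> carrier R" "s \<in> S"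
  shows "frac (a, s) = \<zero>\<^bsub>L\<^esub> \<longleftrightarrow> (\<exists>u\<in>S. u \<otimes> a = \<zero>)"
  using frac_eq_iff[OF assms, of \<zero> \<one>] one_in_S assms by (simp add: loc_zero a_minus_def)

lemma frac_cancel:
  assumes "a \<in> carrier R" "s \<in> S" "c \<in> S"
  shows "frac (c \<otimes> a, c \<otimes> s) = frac (a, s)"
  using assms S_mult_closed by (intro frac_eqI) (auto simp: m_ac)

lemma loc_add_same_denom:
  assumes "a \<in> carrier R" "b \<in> carrier R" "s \<in> S"
  shows "frac (a, s) \<oplus>\<^bsub>L\<^esub> frac (b, s) = frac (a \<oplus> b, s)"
proof -
  have "frac (a, s) \<oplus>\<^bsub>L\<^esub> frac (b, s) = frac (s \<otimes> (a \<oplus> b), s \<otimes> s)"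
    using assms by (simp add: loc_add l_distr r_distr m_comm)
  also have "\<dots> = frac (a \<oplus> b, s)"
    using assms by (intro frac_cancel) auto
  finally show ?thesis .
qed

lemma loc_neg:
  assumes "a \<in> carrier R" "s \<in> S"
  shows "\<ominus>\<^bsub>L\<^esub> frac (a, s) = frac (\<ominus> a, s)"
proof (rule Loc.minus_equality)
  have "frac (\<zero>, s) = \<zero>\<^bsub>L\<^esub>"
    using frac_eq_zero_iff[of \<zero> s] assms one_in_S by auto
  then show "frac (\<ominus> a, s) \<oplus>\<^bsub>L\<^esub> frac (a, s) = \<zero>\<^bsub>L\<^esub>"
    using assms by (simp add: loc_add_same_denom l_neg)
qed (use assms frac_closed in auto)

lemma loc_minus_same_denom:
  assumes "a \<in> carrier R" "b \<in> carrier R" "s \<in> S"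
  shows "frac (a, s) \<ominus>\<^bsub>L\<^esub> frac (b, s) = frac (a \<ominus> b, s)"
  using assms by (simp add: a_minus_def loc_neg loc_add_same_denom)

lemma loc_fsum_same_denom:
  fixes n :: nat
  assumes "\<And>i. i < n \<Longrightarrow> f i \<in> carrier R" "s \<in> S"
  shows "(\<Oplus>\<^bsub>L\<^esub> i\<in>{..<n}. frac (f i, s)) = frac (\<Oplus>i\<in>{..<n}. f i, s)"
  using assms(1)
proof (induction n)
  case 0
  have "frac (\<zero>, s) = \<zero>\<^bsub>L\<^esub>"
    using frac_eq_zero_iff[of \<zero> s] assms one_in_S by auto
  then show ?case
    by simp
next
  case (Suc n)
  have "(\<Oplus>\<^bsub>L\<^esub> i\<in>{..<Suc n}. frac (f i, s)) = frac (f n, s) \<oplus>\<^bsub>L\<^esub> (\<Oplus>\<^bsub>L\<^esub> i\<in>{..<n}. frac (f i, s))"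
    using Suc.prems assms by (intro Loc.fsum_Suc) (auto intro: frac_closed)
  also have "\<dots> = frac (f n \<oplus> (\<Oplus>i\<in>{..<n}. f i), s)"
    using Suc assms by (simp add: loc_add_same_denom fsum_closed)
  also have "\<dots> = frac (\<Oplus>i\<in>{..<Suc n}. f i, s)"
    using Suc.prems by (simp add: fsum_Suc)
  finally show ?case .
qed

lemma loc_lincomb:
  fixes n :: nat
  assumes "\<And>i. i < n \<Longrightarrow> d i \<in> carrier R" "\<And>i. i < n \<Longrightarrow> b i \<in> carrier R" "s \<in> S" "t \<in> S"
  shows "(\<Oplus>\<^bsub>L\<^esub> i\<in>{..<n}. frac (d i, s) \<otimes>\<^bsub>L\<^esub> frac (b i, t)) = frac (\<Oplus>i\<in>{..<n}. d i \<otimes> b i, s \<otimes> t)"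
proof -
  have "(\<Oplus>\<^bsub>L\<^esub> i\<in>{..<n}. frac (d i, s) \<otimes>\<^bsub>L\<^esub> frac (b i, t)) = (\<Oplus>\<^bsub>L\<^esub> i\<in>{..<n}. frac (d i \<otimes> b i, s \<otimes> t))"
    using assms S_mult_closed by (intro Loc.fsum_cong) (auto simp: loc_mult intro!: frac_closed)
  also have "\<dots> = frac (\<Oplus>i\<in>{..<n}. d i \<otimes> b i, s \<otimes> t)"
    using assms S_mult_closed by (intro loc_fsum_same_denom) auto
  finally show ?thesis .
qed

lemma common_denominator:
  fixes n :: nat
  assumes W: "W \<subseteq> carrier R" "\<And>c w. c \<in> carrier R \<Longrightarrow> w \<in> W \<Longrightarrow> c \<otimes> w \<in> W"
    and x: "\<And>i. i < n \<Longrightarrow> \<exists>w s. w \<in> W \<and> s \<in> S \<and> x i = frac (w, s)"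
  shows "\<exists>b t. t \<in> S \<and> (\<forall>i<n. b i \<in> W \<and> x i = frac (b i, t))"
  using x
proof (induction n)
  case 0
  then show ?case
    using one_in_S by blast
next
  case (Suc n)
  obtain b t where bt: "t \<in> S" "\<forall>i<n. b i \<in> W \<and> x i = frac (b i, t)"
    using Suc by auto
  obtain w s where ws: "w \<in> W" "s \<in> S" "x n = frac (w, s)"
    using Suc.prems by blast
  define b' where "b' i = (if i < n then s \<otimes> b i else t \<otimes> w)" for i
  have "b' i \<in> W \<and> x i = frac (b' i, t \<otimes> s)" if "i < Suc n" for i
  proof (cases "i < n")
    case True
    then show ?thesis
      using frac_cancel[of "b i" t s] W bt ws by (auto simp: b'_def m_comm)
  next
    case False
    then have "i = n"
      using that by simp
    then show ?thesis
      using frac_cancel[of w s t] False W bt ws by (auto simp: b'_def)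
  qed
  then show ?case
    using S_mult_closed bt ws by blast
qed

lemma common_annihilator:
  fixes m :: nat
  assumes "\<And>j. j < m \<Longrightarrow> X j \<in> carrier R" "\<And>j. j < m \<Longrightarrow> \<exists>u\<in>S. u \<otimes> X j = \<zero>"
  shows "\<exists>u\<in>S. \<forall>j<m. u \<otimes> X j = \<zero>"
  using assms
proof (induction m)
  case 0
  then show ?case
    using one_in_S by blast
next
  case (Suc m)
  obtain u where u: "u \<in> S" "\<forall>j<m. u \<otimes> X j = \<zero>"
    using Suc by auto
  obtain v where v: "v \<in> S" "v \<otimes> X m = \<zero>"
    using Suc.prems by blast
  have "(u \<otimes> v) \<otimes> X j = \<zero>" if "j < Suc m" for j
  proof (cases "j < m")
    case True
    then have "(u \<otimes> v) \<otimes> X j = v \<otimes> (u \<otimes> X j)"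
      using u(1) v(1) Suc.prems by (simp add: m_ac)
    then show ?thesis
      using u v True by simp
  next
    case False
    then have "(u \<otimes> v) \<otimes> X j = u \<otimes> (v \<otimes> X m)"
      using u(1) v(1) Suc.prems that by (simp add: m_ac less_Suc_eq)
    then show ?thesis
      using u v by simp
  qed
  then show ?case
    using S_mult_closed u v by blast
qed

lemma loc_common_denominator:
  fixes n :: nat
  assumes "\<forall>i<n. r i \<in> carrier L"
  shows "\<exists>d s. s \<in> S \<and> (\<forall>i<n. d i \<in> carrier R \<and> r i = frac (d i, s))"
  using assms loc_carrier_iff by (intro common_denominator[of "carrier R"]) auto

end

section \<open>Passing between a ring and its localization\<close>

context prime_localization
begin

abbreviation loc_tuple :: "(nat \<Rightarrow> 'a) \<Rightarrow> nat \<Rightarrow> ('a \<times> 'a) set" where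
  "loc_tuple c \<equiv> \<lambda>i. frac (c i, \<one>)"

context
  fixes n :: nat and c :: "nat \<Rightarrow> 'a"
  assumes c: "\<And>i. i < n \<Longrightarrow> c i \<in> carrier R"
begin

lemma loc_tuple_closed: "i < n \<Longrightarrow> loc_tuple c i \<in> carrier L"
  using c one_in_S frac_closed by auto

lemma loc_lincomb_loc_tuple:
  assumes "\<forall>i<n. d i \<in> carrier R" "s \<in> S"
  shows "(\<Oplus>\<^bsub>L\<^esub> i\<in>{..<n}. frac (d i, s) \<otimes>\<^bsub>L\<^esub> loc_tuple c i) = frac (\<Oplus>i\<in>{..<n}. d i \<otimes> c i, s)"
  using loc_lincomb[of n d c s \<one>] assms c one_in_S by auto

lemma lin_span_loc_iff:
  "v' \<in> lin_span L n (loc_tuple c) \<longleftrightarrow> (\<exists>v s. v \<in> lin_span R n c \<and> s \<in> S \<and> v' = frac (v, s))"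
proof
  assume "v' \<in> lin_span L n (loc_tuple c)"
  then obtain r where r: "\<forall>i<n. r i \<in> carrier L" "v' = (\<Oplus>\<^bsub>L\<^esub> i\<in>{..<n}. r i \<otimes>\<^bsub>L\<^esub> loc_tuple c i)"
    by (rule Loc.lin_spanE)
  obtain d s where ds: "s \<in> S" "\<forall>i<n. d i \<in> carrier R \<and> r i = frac (d i, s)"
    using loc_common_denominator[OF r(1)] by blast
  have "v' = (\<Oplus>\<^bsub>L\<^esub> i\<in>{..<n}. frac (d i, s) \<otimes>\<^bsub>L\<^esub> loc_tuple c i)"
    using r(2) ds loc_tuple_closed by (auto intro!: Loc.fsum_cong intro: frac_closed)
  also have "\<dots> = frac (\<Oplus>i\<in>{..<n}. d i \<otimes> c i, s)"
    using ds by (intro loc_lincomb_loc_tuple) auto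
  finally show "\<exists>v s. v \<in> lin_span R n c \<and> s \<in> S \<and> v' = frac (v, s)"
    using ds lin_spanI[of n d] by blast
next
  assume "\<exists>v s. v \<in> lin_span R n c \<and> s \<in> S \<and> v' = frac (v, s)"
  then obtain d s where d: "\<forall>i<n. d i \<in> carrier R" and s: "s \<in> S"
    and v': "v' = frac (\<Oplus>i\<in>{..<n}. d i \<otimes> c i, s)"
    by (auto elim: lin_spanE)
  then have "v' = (\<Oplus>\<^bsub>L\<^esub> i\<in>{..<n}. frac (d i, s) \<otimes>\<^bsub>L\<^esub> loc_tuple c i)"
    by (simp add: loc_lincomb_loc_tuple)
  then show "v' \<in> lin_span L n (loc_tuple c)"
    using d s frac_closed by (intro Loc.lin_spanI) auto
qed

lemma is_relation_loc:
  assumes "is_relation R n c d"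
  shows "is_relation L n (loc_tuple c) (loc_tuple d)"
proof -
  have d: "\<forall>i<n. d i \<in> carrier R" "(\<Oplus>i\<in>{..<n}. d i \<otimes> c i) = \<zero>"
    using assms unfolding is_relation_def by auto
  then have "(\<Oplus>\<^bsub>L\<^esub> i\<in>{..<n}. loc_tuple d i \<otimes>\<^bsub>L\<^esub> loc_tuple c i) = \<zero>\<^bsub>L\<^esub>"
    using one_in_S by (simp add: loc_lincomb_loc_tuple loc_zero)
  then show ?thesis
    unfolding is_relation_def using d one_in_S frac_closed by auto
qed

lemma is_relation_loc_clear:
  assumes "is_relation L n (loc_tuple c) r"
  obtains d s u where "s \<in> S" "u \<in> S" "\<forall>i<n. d i \<in> carrier R \<and> r i = frac (d i, s)"
    "is_relation R n c (\<lambda>i. u \<otimes> d i)"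
proof -
  have r: "\<forall>i<n. r i \<in> carrier L" "(\<Oplus>\<^bsub>L\<^esub> i\<in>{..<n}. r i \<otimes>\<^bsub>L\<^esub> loc_tuple c i) = \<zero>\<^bsub>L\<^esub>"
    using assms unfolding is_relation_def by auto
  obtain d s where ds: "s \<in> S" "\<forall>i<n. d i \<in> carrier R \<and> r i = frac (d i, s)"
    using loc_common_denominator[OF r(1)] by blast
  have "(\<Oplus>\<^bsub>L\<^esub> i\<in>{..<n}. r i \<otimes>\<^bsub>L\<^esub> loc_tuple c i) = (\<Oplus>\<^bsub>L\<^esub> i\<in>{..<n}. frac (d i, s) \<otimes>\<^bsub>L\<^esub> loc_tuple c i)"
    using ds loc_tuple_closed by (auto intro!: Loc.fsum_cong intro: frac_closed)
  also have "\<dots> = frac (\<Oplus>i\<in>{..<n}. d i \<otimes> c i, s)"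
    using ds by (intro loc_lincomb_loc_tuple) auto
  finally have "frac (\<Oplus>i\<in>{..<n}. d i \<otimes> c i, s) = \<zero>\<^bsub>L\<^esub>"
    using r(2) by simp
  then obtain u where u: "u \<in> S" "u \<otimes> (\<Oplus>i\<in>{..<n}. d i \<otimes> c i) = \<zero>"
    using frac_eq_zero_iff ds c by (auto simp: fsum_closed)
  then have "(\<Oplus>i\<in>{..<n}. (u \<otimes> d i) \<otimes> c i) = \<zero>"
    using lincomb_smult[of n c d u] ds c by auto
  then have "is_relation R n c (\<lambda>i. u \<otimes> d i)"
    unfolding is_relation_def using u ds by auto
  then show ?thesis
    using that ds u by blast
qed

subsection \<open>From \<open>R\<close> to \<open>L\<close>\<close>

lemma submod_contract:
  assumes N': "submod L (lin_span L n (loc_tuple c)) N'"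
  shows "submod R (lin_span R n c) {v \<in> lin_span R n c. frac (v, \<one>) \<in> N'}"
proof -
  let ?V = "lin_span R n c"
  interpret V: ideal ?V R
    by (rule lin_span_ideal[of n c, OF c])
  have "frac (x \<oplus> y, \<one>) \<in> N'" if "x \<in> ?V" "y \<in> ?V" "frac (x, \<one>) \<in> N'" "frac (y, \<one>) \<in> N'" for x y
  proof -
    have "frac (x \<oplus> y, \<one>) = frac (x, \<one>) \<oplus>\<^bsub>L\<^esub> frac (y, \<one>)"
      using that V.Icarr one_in_S by (simp add: loc_add_same_denom)
    then show ?thesis
      using that Loc.submod_add[OF N'] by simp
  qed
  moreover have "frac (\<ominus> x, \<one>) \<in> N'" if "x \<in> ?V" "frac (x, \<one>) \<in> N'" for x
  proof -
    have "frac (\<ominus> x, \<one>) = \<ominus>\<^bsub>L\<^esub> frac (x, \<one>)"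
      using that V.Icarr one_in_S by (simp add: loc_neg)
    then show ?thesis
      using that Loc.submod_neg[OF N'] by simp
  qed
  moreover have "frac (r \<otimes> x, \<one>) \<in> N'"
    if "r \<in> carrier R" "x \<in> ?V" "frac (x, \<one>) \<in> N'" for r x
  proof -
    have "frac (r \<otimes> x, \<one>) = frac (r, \<one>) \<otimes>\<^bsub>L\<^esub> frac (x, \<one>)"
      using that V.Icarr one_in_S by (simp add: loc_mult)
    then show ?thesis
      using that Loc.submod_smult[OF N'] frac_closed one_in_S by simp
  qed
  moreover have "frac (\<zero>, \<one>) \<in> N'"
    using Loc.submod_zero[OF N'] by (simp add: loc_zero)
  ultimately show ?thesis
    unfolding submod_def using V.a_closed V.a_inv_closed V.I_l_closed by auto
qed

lemma respects_relations_contract: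
  assumes N': "submod L (lin_span L n (loc_tuple c)) N'"
    and resp': "respects_relations L n (loc_tuple c) N' y'"
    and t: "t \<in> S" and b: "\<forall>i<n. b i \<in> lin_span R n c \<and> y' i = frac (b i, t)"
  shows "respects_relations R n c {v \<in> lin_span R n c. frac (v, \<one>) \<in> N'} b"
  unfolding respects_relations_def
proof (intro allI impI)
  fix d assume rel: "is_relation R n c d"
  then have d: "\<forall>i<n. d i \<in> carrier R"
    unfolding is_relation_def by auto
  have bc: "\<And>i. i < n \<Longrightarrow> b i \<in> carrier R"
    using b lin_span_subset_carrier[of n c, OF c] by blast
  let ?s = "\<Oplus>i\<in>{..<n}. d i \<otimes> b i"
  have s: "?s \<in> lin_span R n c" "?s \<in> carrier R"
    using d b bc lincomb_in_ideal[OF lin_span_ideal[of n c, OF c], where r=d and y=b] by (auto simp: fsum_closed)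
  have "(\<Oplus>\<^bsub>L\<^esub> i\<in>{..<n}. loc_tuple d i \<otimes>\<^bsub>L\<^esub> y' i) \<in> N'"
    using resp' is_relation_loc[OF rel] unfolding respects_relations_def by blast
  moreover have "(\<Oplus>\<^bsub>L\<^esub> i\<in>{..<n}. loc_tuple d i \<otimes>\<^bsub>L\<^esub> y' i) = frac (?s, t)"
  proof -
    have "(\<Oplus>\<^bsub>L\<^esub> i\<in>{..<n}. loc_tuple d i \<otimes>\<^bsub>L\<^esub> y' i) =
        (\<Oplus>\<^bsub>L\<^esub> i\<in>{..<n}. frac (d i, \<one>) \<otimes>\<^bsub>L\<^esub> frac (b i, t))"
    proof (rule Loc.fsum_cong)
      fix i assume "i < n"
      then show "loc_tuple d i \<otimes>\<^bsub>L\<^esub> y' i = frac (d i, \<one>) \<otimes>\<^bsub>L\<^esub> frac (b i, t)"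
        using b by simp
      show "frac (d i, \<one>) \<otimes>\<^bsub>L\<^esub> frac (b i, t) \<in> carrier L"
        using \<open>i < n\<close> d bc one_in_S t by (intro Loc.m_closed frac_closed) auto
    qed
    also have "\<dots> = frac (?s, \<one> \<otimes> t)"
      using d bc one_in_S t by (intro loc_lincomb) auto
    finally show ?thesis
      using t by simp
  qed
  ultimately have "frac (?s, t) \<in> N'"
    by simp
  then have "frac (t, \<one>) \<otimes>\<^bsub>L\<^esub> frac (?s, t) \<in> N'"
    using Loc.submod_smult[OF N'] frac_closed t one_in_S by simp
  moreover have "frac (t, \<one>) \<otimes>\<^bsub>L\<^esub> frac (?s, t) = frac (t \<otimes> ?s, \<one> \<otimes> t)"
    using s t one_in_S by (simp add: loc_mult)
  moreover have "\<dots> = frac (?s, \<one>)"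
    using s t one_in_S by (intro frac_eqI) (auto simp: m_comm)
  ultimately have "frac (?s, \<one>) \<in> N'"
    by simp
  then show "?s \<in> {v \<in> lin_span R n c. frac (v, \<one>) \<in> N'}"
    using s by auto
qed

lemma respects_relations_loc:
  assumes z: "\<And>i. i < n \<Longrightarrow> z i \<in> carrier R" and resp: "respects_relations R n c {\<zero>} z"
    and t: "t \<in> S"
  shows "respects_relations L n (loc_tuple c) {\<zero>\<^bsub>L\<^esub>} (\<lambda>i. frac (z i, t))"
  unfolding respects_relations_def
proof (intro allI impI)
  fix r assume "is_relation L n (loc_tuple c) r"
  then obtain d s u where dsu: "s \<in> S" "u \<in> S" "\<forall>i<n. d i \<in> carrier R \<and> r i = frac (d i, s)"
    "is_relation R n c (\<lambda>i. u \<otimes> d i)"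
    by (rule is_relation_loc_clear)
  have dc: "\<And>i. i < n \<Longrightarrow> d i \<in> carrier R"
    using dsu by auto
  have "(\<Oplus>\<^bsub>L\<^esub> i\<in>{..<n}. r i \<otimes>\<^bsub>L\<^esub> frac (z i, t)) = (\<Oplus>\<^bsub>L\<^esub> i\<in>{..<n}. frac (d i, s) \<otimes>\<^bsub>L\<^esub> frac (z i, t))"
  proof (rule Loc.fsum_cong)
    fix i assume i: "i < n"
    then show "r i \<otimes>\<^bsub>L\<^esub> frac (z i, t) = frac (d i, s) \<otimes>\<^bsub>L\<^esub> frac (z i, t)"
      using dsu(3) by simp
    show "frac (d i, s) \<otimes>\<^bsub>L\<^esub> frac (z i, t) \<in> carrier L"
      using i dc z dsu(1) t by (intro Loc.m_closed frac_closed) auto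
  qed
  also have "\<dots> = frac (\<Oplus>i\<in>{..<n}. d i \<otimes> z i, s \<otimes> t)"
    using dc z dsu(1) t by (intro loc_lincomb) auto
  also have "\<dots> = \<zero>\<^bsub>L\<^esub>"
  proof -
    have "u \<otimes> (\<Oplus>i\<in>{..<n}. d i \<otimes> z i) = (\<Oplus>i\<in>{..<n}. (u \<otimes> d i) \<otimes> z i)"
      using lincomb_smult[of n z d u] z dc dsu by auto
    also have "\<dots> = \<zero>"
      using resp dsu(4) unfolding respects_relations_def by blast
    finally have "u \<otimes> (\<Oplus>i\<in>{..<n}. d i \<otimes> z i) = \<zero>" .
    moreover have "(\<Oplus>i\<in>{..<n}. d i \<otimes> z i) \<in> carrier R"
      using dc z by (simp add: fsum_closed)
    ultimately show ?thesis
      using frac_eq_zero_iff S_mult_closed[OF dsu(1) t] dsu(2) by blast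
  qed
  finally show "(\<Oplus>\<^bsub>L\<^esub> i\<in>{..<n}. r i \<otimes>\<^bsub>L\<^esub> frac (z i, t)) \<in> {\<zero>\<^bsub>L\<^esub>}"
    by simp
qed

lemma relation_lifting_loc:
  assumes lift: "relation_lifting R n c"
  shows "relation_lifting L n (loc_tuple c)"
  unfolding relation_lifting_def
proof (intro allI impI, elim conjE)
  let ?V = "lin_span R n c" and ?V' = "lin_span L n (loc_tuple c)"
  fix N' y'
  assume N': "submod L ?V' N'" and y': "\<forall>i<n. y' i \<in> ?V'"
    and resp': "respects_relations L n (loc_tuple c) N' y'"
  interpret V: ideal ?V R
    by (rule lin_span_ideal[of n c, OF c])
  have "\<exists>b t. t \<in> S \<and> (\<forall>i<n. b i \<in> ?V \<and> y' i = frac (b i, t))"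
    using y' lin_span_loc_iff V.I_l_closed V.a_subset by (intro common_denominator) auto
  then obtain b t where bt: "t \<in> S" "\<forall>i<n. b i \<in> ?V \<and> y' i = frac (b i, t)"
    by blast
  have bc: "\<And>i. i < n \<Longrightarrow> b i \<in> carrier R"
    using bt V.Icarr by blast
  let ?N = "{v \<in> ?V. frac (v, \<one>) \<in> N'}"
  obtain z where z: "\<forall>i<n. z i \<in> ?V" "\<forall>i<n. z i \<ominus> b i \<in> ?N" "respects_relations R n c {\<zero>} z"
    using lift[unfolded relation_lifting_def, rule_format,
        OF conjI[OF submod_contract[OF N'] conjI[OF _ respects_relations_contract[OF N' resp' bt]]]]
      bt by blast
  have zc: "\<And>i. i < n \<Longrightarrow> z i \<in> carrier R"
    using z(1) V.Icarr by blast
  have "frac (z i, t) \<ominus>\<^bsub>L\<^esub> y' i \<in> N'" if i: "i < n" for i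
  proof -
    have "frac (z i, t) \<ominus>\<^bsub>L\<^esub> y' i = frac (z i \<ominus> b i, t)"
      using bt i zc bc loc_minus_same_denom by auto
    also have "\<dots> = frac (\<one>, t) \<otimes>\<^bsub>L\<^esub> frac (z i \<ominus> b i, \<one>)"
      using i zc bc bt one_in_S by (simp add: loc_mult)
    finally show ?thesis
      using Loc.submod_smult[OF N'] z(2) i frac_closed bt one_in_S by auto
  qed
  moreover have "\<forall>i<n. frac (z i, t) \<in> ?V'"
    using z(1) bt lin_span_loc_iff by blast
  ultimately show "\<exists>z'. (\<forall>i<n. z' i \<in> ?V') \<and> (\<forall>i<n. z' i \<ominus>\<^bsub>L\<^esub> y' i \<in> N') \<and>
      respects_relations L n (loc_tuple c) {\<zero>\<^bsub>L\<^esub>} z'"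
    using respects_relations_loc[OF zc z(3) bt(1)] by (intro exI[of _ "\<lambda>i. frac (z i, t)"]) auto
qed

subsection \<open>From \<open>L\<close> back to \<open>R\<close>\<close>

lemma submod_extend:
  assumes N: "submod R (lin_span R n c) N"
  shows "submod L (lin_span L n (loc_tuple c)) {frac (v, s) | v s. v \<in> N \<and> s \<in> S}"
    (is "submod L _ ?N'")
proof -
  have Nc: "N \<subseteq> carrier R"
    by (rule submod_subset_carrier[OF N lin_span_subset_carrier[of n c, OF c]])
  have "x \<oplus>\<^bsub>L\<^esub> y \<in> ?N'" if "x \<in> ?N'" "y \<in> ?N'" for x y
  proof -
    obtain v s v' s' where vs: "v \<in> N" "s \<in> S" "x = frac (v, s)" "v' \<in> N" "s' \<in> S" "y = frac (v', s')"
      using \<open>x \<in> ?N'\<close> \<open>y \<in> ?N'\<close> by blast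
    moreover have "v \<in> carrier R" "v' \<in> carrier R"
      using vs Nc by auto
    ultimately have "x \<oplus>\<^bsub>L\<^esub> y = frac (s' \<otimes> v \<oplus> s \<otimes> v', s \<otimes> s')"
      by (simp add: loc_add m_comm)
    moreover have "s' \<otimes> v \<oplus> s \<otimes> v' \<in> N"
      using vs submod_add[OF N] submod_smult[OF N] by auto
    ultimately show ?thesis
      using vs S_mult_closed by blast
  qed
  moreover have "\<ominus>\<^bsub>L\<^esub> x \<in> ?N'" if "x \<in> ?N'" for x
  proof -
    obtain v s where vs: "v \<in> N" "s \<in> S" "x = frac (v, s)"
      using \<open>x \<in> ?N'\<close> by blast
    then have "\<ominus>\<^bsub>L\<^esub> x = frac (\<ominus> v, s)"
      using loc_neg[of v s] Nc by auto
    then show ?thesis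
      using vs submod_neg[OF N] by blast
  qed
  moreover have "r \<otimes>\<^bsub>L\<^esub> x \<in> ?N'" if r: "r \<in> carrier L" and x: "x \<in> ?N'" for r x
  proof -
    obtain v s where vs: "v \<in> N" "s \<in> S" "x = frac (v, s)"
      using x by blast
    obtain e t where et: "e \<in> carrier R" "t \<in> S" "r = frac (e, t)"
      using r by (rule locE)
    then have "r \<otimes>\<^bsub>L\<^esub> x = frac (e \<otimes> v, t \<otimes> s)"
      using vs Nc loc_mult[of e t v s] by auto
    then show ?thesis
      using et vs submod_smult[OF N] S_mult_closed by blast
  qed
  moreover have "?N' \<subseteq> lin_span L n (loc_tuple c)"
    using submod_subset[OF N] lin_span_loc_iff by blast
  moreover have "\<zero>\<^bsub>L\<^esub> \<in> ?N'"
    using submod_zero[OF N] one_in_S by (auto simp: loc_zero)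
  ultimately show ?thesis
    unfolding submod_def by (intro conjI ballI) auto
qed

lemma respects_relations_extend:
  assumes y: "\<And>i. i < n \<Longrightarrow> y i \<in> carrier R" and resp: "respects_relations R n c N y"
  shows "respects_relations L n (loc_tuple c) {frac (v, s) | v s. v \<in> N \<and> s \<in> S} (loc_tuple y)"
  unfolding respects_relations_def
proof (intro allI impI)
  fix r assume "is_relation L n (loc_tuple c) r"
  then obtain d s u where dsu: "s \<in> S" "u \<in> S" "\<forall>i<n. d i \<in> carrier R \<and> r i = frac (d i, s)"
    "is_relation R n c (\<lambda>i. u \<otimes> d i)"
    by (rule is_relation_loc_clear)
  have dc: "\<And>i. i < n \<Longrightarrow> d i \<in> carrier R"
    using dsu by auto
  have sc: "(\<Oplus>i\<in>{..<n}. d i \<otimes> y i) \<in> carrier R"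
    using dc y by (simp add: fsum_closed)
  have "(\<Oplus>\<^bsub>L\<^esub> i\<in>{..<n}. r i \<otimes>\<^bsub>L\<^esub> loc_tuple y i) = (\<Oplus>\<^bsub>L\<^esub> i\<in>{..<n}. frac (d i, s) \<otimes>\<^bsub>L\<^esub> loc_tuple y i)"
  proof (rule Loc.fsum_cong)
    fix i assume i: "i < n"
    then show "r i \<otimes>\<^bsub>L\<^esub> loc_tuple y i = frac (d i, s) \<otimes>\<^bsub>L\<^esub> loc_tuple y i"
      using dsu(3) by simp
    show "frac (d i, s) \<otimes>\<^bsub>L\<^esub> loc_tuple y i \<in> carrier L"
      using i dc y dsu(1) one_in_S by (intro Loc.m_closed frac_closed) auto
  qed
  also have "\<dots> = frac (\<Oplus>i\<in>{..<n}. d i \<otimes> y i, s \<otimes> \<one>)"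
    using dc y dsu(1) one_in_S by (intro loc_lincomb) auto
  also have "\<dots> = frac (u \<otimes> (\<Oplus>i\<in>{..<n}. d i \<otimes> y i), u \<otimes> s)"
    using frac_cancel[OF sc _ dsu(2), of s] dsu(1) by simp
  also have "u \<otimes> (\<Oplus>i\<in>{..<n}. d i \<otimes> y i) = (\<Oplus>i\<in>{..<n}. (u \<otimes> d i) \<otimes> y i)"
    using lincomb_smult[of n y d u] y dc dsu(2) by auto
  finally show "(\<Oplus>\<^bsub>L\<^esub> i\<in>{..<n}. r i \<otimes>\<^bsub>L\<^esub> loc_tuple y i) \<in> {frac (v, s) | v s. v \<in> N \<and> s \<in> S}"
    using resp dsu S_mult_closed unfolding respects_relations_def by blast
qed

lemma respects_relations_loc_clear:
  assumes X: "\<And>i. i < n \<Longrightarrow> X i \<in> carrier R" and s: "s \<in> S"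
    and z': "\<forall>i<n. z' i = frac (X i, s)" and resp': "respects_relations L n (loc_tuple c) {\<zero>\<^bsub>L\<^esub>} z'"
    and h: "is_relation R n c h"
  shows "\<exists>u\<in>S. u \<otimes> (\<Oplus>i\<in>{..<n}. h i \<otimes> X i) = \<zero>"
proof -
  have hc: "\<And>i. i < n \<Longrightarrow> h i \<in> carrier R"
    using h unfolding is_relation_def by blast
  have "frac (\<Oplus>i\<in>{..<n}. h i \<otimes> X i, \<one> \<otimes> s) =
      (\<Oplus>\<^bsub>L\<^esub> i\<in>{..<n}. loc_tuple h i \<otimes>\<^bsub>L\<^esub> frac (X i, s))"
    using hc X s one_in_S by (intro loc_lincomb[symmetric]) auto
  also have "\<dots> = (\<Oplus>\<^bsub>L\<^esub> i\<in>{..<n}. loc_tuple h i \<otimes>\<^bsub>L\<^esub> z' i)"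
    using hc X s one_in_S z' frac_closed by (intro Loc.fsum_cong) auto
  also have "\<dots> = \<zero>\<^bsub>L\<^esub>"
    using resp' is_relation_loc[OF h] unfolding respects_relations_def by blast
  finally show ?thesis
    using frac_eq_zero_iff[of _ s] hc X s by (simp add: fsum_closed)
qed

text \<open>A lift in \<open>L\<close> of the images of \<open>y\<close> has the form \<open>((s y\<^sub>i + w\<^sub>i)/s)\<^sub>i\<close> with \<open>w\<^sub>i \<in> N\<close>.\<close>
lemma local_lift_numerators:
  fixes m :: nat
  assumes lift: "relation_lifting L n (loc_tuple c)"
    and g: "\<forall>j<m. is_relation R n c (g j)"
    and N: "submod R (lin_span R n c) N" and y: "\<forall>i<n. y i \<in> lin_span R n c"
    and resp: "respects_relations R n c N y"
  obtains s w where "s \<in> S" "\<forall>i<n. w i \<in> N"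
    "\<forall>j<m. \<exists>u\<in>S. u \<otimes> (\<Oplus>i\<in>{..<n}. g j i \<otimes> (s \<otimes> y i \<oplus> w i)) = \<zero>"
proof -
  let ?V = "lin_span R n c" and ?V' = "lin_span L n (loc_tuple c)"
  let ?N' = "{frac (v, s) | v s. v \<in> N \<and> s \<in> S}"
  have V: "?V \<subseteq> carrier R"
    by (rule lin_span_subset_carrier[of n c, OF c])
  have Nc: "N \<subseteq> carrier R"
    by (rule submod_subset_carrier[OF N V])
  have yc: "\<And>i. i < n \<Longrightarrow> y i \<in> carrier R"
    using y V by blast
  have gc: "\<And>j i. j < m \<Longrightarrow> i < n \<Longrightarrow> g j i \<in> carrier R"
    using g unfolding is_relation_def by blast
  have y': "\<forall>i<n. loc_tuple y i \<in> ?V'"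
    using y one_in_S by (auto simp: lin_span_loc_iff)
  obtain z' where z': "\<forall>i<n. z' i \<in> ?V'" "\<forall>i<n. z' i \<ominus>\<^bsub>L\<^esub> loc_tuple y i \<in> ?N'"
      "respects_relations L n (loc_tuple c) {\<zero>\<^bsub>L\<^esub>} z'"
    using lift[unfolded relation_lifting_def, rule_format,
        OF conjI[OF submod_extend[OF N] conjI[OF y' respects_relations_extend[OF yc resp]]]]
    by blast
  have "\<exists>w s. s \<in> S \<and> (\<forall>i<n. w i \<in> N \<and> z' i \<ominus>\<^bsub>L\<^esub> loc_tuple y i = frac (w i, s))"
  proof (rule common_denominator)
    show "\<And>i. i < n \<Longrightarrow> \<exists>w s. w \<in> N \<and> s \<in> S \<and> z' i \<ominus>\<^bsub>L\<^esub> loc_tuple y i = frac (w, s)"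
      using z'(2) by blast
  qed (use Nc submod_smult[OF N] in auto)
  then obtain w s where s: "s \<in> S" and w: "\<forall>i<n. w i \<in> N \<and> z' i \<ominus>\<^bsub>L\<^esub> loc_tuple y i = frac (w i, s)"
    by blast
  have wc: "\<And>i. i < n \<Longrightarrow> w i \<in> carrier R"
    using w Nc by blast
  define X where "X i = s \<otimes> y i \<oplus> w i" for i
  have Xc: "\<And>i. i < n \<Longrightarrow> X i \<in> carrier R"
    unfolding X_def using yc wc s by auto
  have z'X: "z' i = frac (X i, s)" if i: "i < n" for i
  proof -
    have "z' i \<in> carrier L" "loc_tuple y i \<in> carrier L"
      using z'(1) y' i Loc.lin_span_subset_carrier[of n "loc_tuple c"] loc_tuple_closed by blast+
    then have "z' i = (z' i \<ominus>\<^bsub>L\<^esub> loc_tuple y i) \<oplus>\<^bsub>L\<^esub> loc_tuple y i"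
      by (simp add: a_minus_def Loc.a_assoc Loc.l_neg)
    also have "\<dots> = frac (w i \<otimes> \<one> \<oplus> y i \<otimes> s, s \<otimes> \<one>)"
      using w i wc yc s one_in_S by (simp add: loc_add)
    also have "\<dots> = frac (X i, s)"
      unfolding X_def using wc yc s i by (simp add: a_comm m_comm)
    finally show ?thesis .
  qed
  have "\<forall>j<m. \<exists>u\<in>S. u \<otimes> (\<Oplus>i\<in>{..<n}. g j i \<otimes> X i) = \<zero>"
    using respects_relations_loc_clear[where X=X, OF Xc s _ z'(3)] z'X g by blast
  then show ?thesis
    using that s w unfolding X_def by blast
qed

lemma local_correction:
  fixes m :: nat
  assumes lift: "relation_lifting L n (loc_tuple c)"
    and g: "\<forall>j<m. is_relation R n c (g j)"
    and N: "submod R (lin_span R n c) N" and y: "\<forall>i<n. y i \<in> lin_span R n c"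
    and resp: "respects_relations R n c N y"
  obtains x w where "x \<in> S" "\<forall>i<n. w i \<in> N"
    "\<forall>j<m. (\<Oplus>i\<in>{..<n}. g j i \<otimes> (x \<otimes> y i \<oplus> w i)) = \<zero>"
proof -
  obtain s w where s: "s \<in> S" and w: "\<forall>i<n. w i \<in> N"
    and ann: "\<forall>j<m. \<exists>u\<in>S. u \<otimes> (\<Oplus>i\<in>{..<n}. g j i \<otimes> (s \<otimes> y i \<oplus> w i)) = \<zero>"
    by (rule local_lift_numerators[OF lift g N y resp])
  have V: "lin_span R n c \<subseteq> carrier R"
    by (rule lin_span_subset_carrier[of n c, OF c])
  have yc: "\<And>i. i < n \<Longrightarrow> y i \<in> carrier R" and wc: "\<And>i. i < n \<Longrightarrow> w i \<in> carrier R"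
    using y w V submod_subset_carrier[OF N V] by blast+
  have gc: "\<And>j i. j < m \<Longrightarrow> i < n \<Longrightarrow> g j i \<in> carrier R"
    using g unfolding is_relation_def by blast
  define X where "X i = s \<otimes> y i \<oplus> w i" for i
  have Xc: "\<And>i. i < n \<Longrightarrow> X i \<in> carrier R"
    unfolding X_def using yc wc s by auto
  obtain u where u: "u \<in> S" "\<forall>j<m. u \<otimes> (\<Oplus>i\<in>{..<n}. g j i \<otimes> X i) = \<zero>"
    using common_annihilator[of m "\<lambda>j. \<Oplus>i\<in>{..<n}. g j i \<otimes> X i"] ann gc Xc
    unfolding X_def by (auto simp: fsum_closed)
  have corrected: "(\<Oplus>i\<in>{..<n}. g j i \<otimes> ((u \<otimes> s) \<otimes> y i \<oplus> u \<otimes> w i)) = \<zero>" if j: "j < m" for j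
  proof -
    have "(\<Oplus>i\<in>{..<n}. g j i \<otimes> ((u \<otimes> s) \<otimes> y i \<oplus> u \<otimes> w i)) = (\<Oplus>i\<in>{..<n}. u \<otimes> (g j i \<otimes> X i))"
    proof (rule fsum_cong)
      fix i assume i: "i < n"
      have "g j i \<in> carrier R" "y i \<in> carrier R" "w i \<in> carrier R" "u \<in> carrier R" "s \<in> carrier R"
        using gc j yc wc u s i by auto
      then show "g j i \<otimes> ((u \<otimes> s) \<otimes> y i \<oplus> u \<otimes> w i) = u \<otimes> (g j i \<otimes> X i)"
        unfolding X_def by algebra
      show "u \<otimes> (g j i \<otimes> X i) \<in> carrier R"
        using gc j Xc u i by auto
    qed
    also have "\<dots> = u \<otimes> (\<Oplus>i\<in>{..<n}. g j i \<otimes> X i)"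
      using gc j Xc u by (intro fsum_smult) auto
    finally show ?thesis
      using u j by simp
  qed
  show ?thesis
  proof (rule that[of "u \<otimes> s" "\<lambda>i. u \<otimes> w i"])
    show "u \<otimes> s \<in> S"
      using S_mult_closed u(1) s by blast
    show "\<forall>i<n. u \<otimes> w i \<in> N"
      using w u(1) submod_smult[OF N] by blast
  qed (use corrected in blast)
qed
end

lemma fg_ideal_loc:
  assumes "fg_ideal L I"
  obtains n c where "\<forall>i<n. c i \<in> carrier R" "I = lin_span L n (loc_tuple c)"
proof -
  obtain n x where x: "\<forall>i<n. x i \<in> carrier L" and I: "I = lin_span L n x"
    using assms Loc.fg_ideal_iff_lin_span by blast
  obtain c t where t: "t \<in> S" and c: "\<forall>i<n. c i \<in> carrier R \<and> x i = frac (c i, t)"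
    using loc_common_denominator[OF x] by blast
  have "x i = frac (\<one>, t) \<otimes>\<^bsub>L\<^esub> loc_tuple c i" if "i < n" for i
    using that c t one_in_S by (simp add: loc_mult)
  then have "lin_span L n x = lin_span L n (\<lambda>i. frac (\<one>, t) \<otimes>\<^bsub>L\<^esub> loc_tuple c i)"
    using c t one_in_S frac_closed by (intro Loc.lin_span_cong) auto
  also have "\<dots> = lin_span L n (loc_tuple c)"
  proof (rule Loc.lin_span_smult_unit)
    show "frac (t, \<one>) \<otimes>\<^bsub>L\<^esub> frac (\<one>, t) = \<one>\<^bsub>L\<^esub>"
      using t one_in_S by (simp add: loc_mult loc_one frac_eqI)
  qed (use c t one_in_S frac_closed in auto)
  finally show ?thesis
    using that[of n c] c I by blast
qed

lemma fqp_ring_loc: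
  assumes fqp: "fqp_ring R"
  shows "fqp_ring L"
  unfolding fqp_ring_def
proof (intro allI impI, elim conjE)
  fix I assume fg: "fg_ideal L I"
  obtain n c where c: "\<forall>i<n. c i \<in> carrier R" and I: "I = lin_span L n (loc_tuple c)"
    using fg by (rule fg_ideal_loc)
  have cc: "\<And>i. i < n \<Longrightarrow> c i \<in> carrier R" and lc: "\<And>i. i < n \<Longrightarrow> loc_tuple c i \<in> carrier L"
    using c one_in_S frac_closed by auto
  have "relation_lifting L n (loc_tuple c)"
    using relation_lifting_loc[of n c, OF cc relation_lifting_if_fqp_ring[of n c, OF cc fqp]] .
  then show "quasi_projective L I"
    unfolding I using Loc.quasi_projective_if_relation_lifting[of n "loc_tuple c", OF lc] by blast
qed

end

section \<open>The local-global principle\<close>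

definition correction_ideal ::
    "('a, 'b) ring_scheme \<Rightarrow> nat \<Rightarrow> nat \<Rightarrow> (nat \<Rightarrow> nat \<Rightarrow> 'a) \<Rightarrow> 'a set \<Rightarrow> (nat \<Rightarrow> 'a) \<Rightarrow> 'a set" where
  "correction_ideal R n m g N y =
     {x \<in> carrier R. \<exists>w. (\<forall>i<n. w i \<in> N) \<and>
        (\<forall>j<m. (\<Oplus>\<^bsub>R\<^esub> i\<in>{..<n}. g j i \<otimes>\<^bsub>R\<^esub> (x \<otimes>\<^bsub>R\<^esub> y i \<oplus>\<^bsub>R\<^esub> w i)) = \<zero>\<^bsub>R\<^esub>)}"

context cring
begin

lemma correction_sum_add:
  fixes n :: nat
  assumes "\<And>i. i < n \<Longrightarrow> h i \<in> carrier R" "\<And>i. i < n \<Longrightarrow> y i \<in> carrier R"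
    and "\<And>i. i < n \<Longrightarrow> w i \<in> carrier R" "\<And>i. i < n \<Longrightarrow> w' i \<in> carrier R"
    and "x \<in> carrier R" "x' \<in> carrier R"
  shows "(\<Oplus>i\<in>{..<n}. h i \<otimes> ((x \<oplus> x') \<otimes> y i \<oplus> (w i \<oplus> w' i))) =
    (\<Oplus>i\<in>{..<n}. h i \<otimes> (x \<otimes> y i \<oplus> w i)) \<oplus> (\<Oplus>i\<in>{..<n}. h i \<otimes> (x' \<otimes> y i \<oplus> w' i))"
proof -
  have "(\<Oplus>i\<in>{..<n}. h i \<otimes> ((x \<oplus> x') \<otimes> y i \<oplus> (w i \<oplus> w' i))) =
      (\<Oplus>i\<in>{..<n}. h i \<otimes> (x \<otimes> y i \<oplus> w i) \<oplus> h i \<otimes> (x' \<otimes> y i \<oplus> w' i))"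
  proof (rule fsum_cong)
    fix i assume "i < n"
    then have "h i \<in> carrier R" "y i \<in> carrier R" "w i \<in> carrier R" "w' i \<in> carrier R"
      using assms by auto
    then show "h i \<otimes> ((x \<oplus> x') \<otimes> y i \<oplus> (w i \<oplus> w' i)) =
        h i \<otimes> (x \<otimes> y i \<oplus> w i) \<oplus> h i \<otimes> (x' \<otimes> y i \<oplus> w' i)"
      "h i \<otimes> (x \<otimes> y i \<oplus> w i) \<oplus> h i \<otimes> (x' \<otimes> y i \<oplus> w' i) \<in> carrier R"
      using assms(5,6) by (algebra, simp)
  qed
  then show ?thesis
    using assms by (simp add: fsum_add)
qed

lemma correction_sum_smult:
  fixes n :: nat
  assumes "\<And>i. i < n \<Longrightarrow> h i \<in> carrier R" "\<And>i. i < n \<Longrightarrow> y i \<in> carrier R"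
    and "\<And>i. i < n \<Longrightarrow> w i \<in> carrier R" "r \<in> carrier R" "x \<in> carrier R"
  shows "(\<Oplus>i\<in>{..<n}. h i \<otimes> ((r \<otimes> x) \<otimes> y i \<oplus> r \<otimes> w i)) = r \<otimes> (\<Oplus>i\<in>{..<n}. h i \<otimes> (x \<otimes> y i \<oplus> w i))"
proof -
  have "(\<Oplus>i\<in>{..<n}. h i \<otimes> ((r \<otimes> x) \<otimes> y i \<oplus> r \<otimes> w i)) = (\<Oplus>i\<in>{..<n}. r \<otimes> (h i \<otimes> (x \<otimes> y i \<oplus> w i)))"
  proof (rule fsum_cong)
    fix i assume "i < n"
    then have "h i \<in> carrier R" "y i \<in> carrier R" "w i \<in> carrier R"
      using assms by auto
    then show "h i \<otimes> ((r \<otimes> x) \<otimes> y i \<oplus> r \<otimes> w i) = r \<otimes> (h i \<otimes> (x \<otimes> y i \<oplus> w i))"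
      "r \<otimes> (h i \<otimes> (x \<otimes> y i \<oplus> w i)) \<in> carrier R"
      using assms(4,5) by (algebra, simp)
  qed
  then show ?thesis
    using assms by (simp add: fsum_smult)
qed

lemma ideal_correction_ideal:
  fixes n m :: nat
  assumes N: "submod R V N" "V \<subseteq> carrier R"
    and y: "\<And>i. i < n \<Longrightarrow> y i \<in> carrier R" and g: "\<And>j i. j < m \<Longrightarrow> i < n \<Longrightarrow> g j i \<in> carrier R"
  shows "ideal (correction_ideal R n m g N y) R"
proof (rule ideal_by_closure)
  have Nc: "N \<subseteq> carrier R"
    by (rule submod_subset_carrier[OF N])
  show "correction_ideal R n m g N y \<subseteq> carrier R"
    unfolding correction_ideal_def by blast
  have "(\<Oplus>i\<in>{..<n}. g j i \<otimes> (\<zero> \<otimes> y i \<oplus> \<zero>)) = \<zero>" if "j < m" for j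
  proof -
    have "(\<Oplus>i\<in>{..<n}. g j i \<otimes> (\<zero> \<otimes> y i \<oplus> \<zero>)) \<in> carrier R"
      using that g y by (intro fsum_closed) auto
    then show ?thesis
      using correction_sum_smult[of n "g j" y "\<lambda>i. \<zero>" \<zero> \<zero>] that g y by simp
  qed
  then show "\<zero> \<in> correction_ideal R n m g N y"
    unfolding correction_ideal_def using submod_zero[OF N(1)] by auto
next
  have Nc: "N \<subseteq> carrier R"
    by (rule submod_subset_carrier[OF N])
  fix x x' assume "x \<in> correction_ideal R n m g N y" "x' \<in> correction_ideal R n m g N y"
  then obtain w w' where x: "x \<in> carrier R" "\<forall>i<n. w i \<in> N"
      "\<forall>j<m. (\<Oplus>i\<in>{..<n}. g j i \<otimes> (x \<otimes> y i \<oplus> w i)) = \<zero>"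
    and x': "x' \<in> carrier R" "\<forall>i<n. w' i \<in> N" "\<forall>j<m. (\<Oplus>i\<in>{..<n}. g j i \<otimes> (x' \<otimes> y i \<oplus> w' i)) = \<zero>"
    unfolding correction_ideal_def by blast
  have "(\<Oplus>i\<in>{..<n}. g j i \<otimes> ((x \<oplus> x') \<otimes> y i \<oplus> (w i \<oplus> w' i))) = \<zero>" if "j < m" for j
    using that x x' Nc g y by (subst correction_sum_add) auto
  then show "x \<oplus> x' \<in> correction_ideal R n m g N y"
    unfolding correction_ideal_def using x(1,2) x'(1,2) submod_add[OF N(1)]
    by (intro CollectI conjI exI[of _ "\<lambda>i. w i \<oplus> w' i"]) auto
next
  have Nc: "N \<subseteq> carrier R"
    by (rule submod_subset_carrier[OF N])
  fix r x assume r: "r \<in> carrier R" and "x \<in> correction_ideal R n m g N y"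
  then obtain w where x: "x \<in> carrier R" "\<forall>i<n. w i \<in> N"
      "\<forall>j<m. (\<Oplus>i\<in>{..<n}. g j i \<otimes> (x \<otimes> y i \<oplus> w i)) = \<zero>"
    unfolding correction_ideal_def by blast
  have "(\<Oplus>i\<in>{..<n}. g j i \<otimes> ((r \<otimes> x) \<otimes> y i \<oplus> r \<otimes> w i)) = \<zero>" if "j < m" for j
    using that x Nc g y r by (subst correction_sum_smult) auto
  then show "r \<otimes> x \<in> correction_ideal R n m g N y"
    unfolding correction_ideal_def using x(1,2) r submod_smult[OF N(1)]
    by (intro CollectI conjI exI[of _ "\<lambda>i. r \<otimes> w i"]) auto
qed

lemma ideal_Union_chain:
  assumes C: "C \<noteq> {}" and ideals: "\<And>I. I \<in> C \<Longrightarrow> ideal I R"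
    and chain: "\<And>I J. I \<in> C \<Longrightarrow> J \<in> C \<Longrightarrow> I \<subseteq> J \<or> J \<subseteq> I"
  shows "ideal (\<Union>C) R"
proof (rule ideal_by_closure)
  show "\<Union>C \<subseteq> carrier R"
    using ideals by (meson Sup_least additive_subgroup.a_subset ideal.axioms(1))
  obtain I where I: "I \<in> C"
    using C by blast
  then have "\<zero> \<in> I"
    using ideals by (simp add: additive_subgroup.zero_closed ideal.axioms(1))
  then show "\<zero> \<in> \<Union>C"
    using I by blast
next
  fix x y assume "x \<in> \<Union>C" "y \<in> \<Union>C"
  then obtain I J where IJ: "I \<in> C" "J \<in> C" "x \<in> I" "y \<in> J"
    by blast
  have "x \<oplus> y \<in> I \<union> J"
  proof (cases "I \<subseteq> J")
    case True
    then show ?thesis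
      using IJ ideals[of J] by (meson UnI2 additive_subgroup.a_closed ideal.axioms(1) subsetD)
  next
    case False
    then have "J \<subseteq> I"
      using chain IJ by blast
    then show ?thesis
      using IJ ideals[of I] by (meson UnI1 additive_subgroup.a_closed ideal.axioms(1) subsetD)
  qed
  then show "x \<oplus> y \<in> \<Union>C"
    using IJ by blast
next
  fix r x assume "r \<in> carrier R" "x \<in> \<Union>C"
  then obtain I where "I \<in> C" "x \<in> I" "r \<in> carrier R"
    by blast
  then show "r \<otimes> x \<in> \<Union>C"
    using ideal.I_l_closed[OF ideals[OF \<open>I \<in> C\<close>]] by blast
qed

lemma ideal_in_maximalideal:
  assumes J: "ideal J R" "\<one> \<notin> J"
  obtains M where "maximalideal M R" "J \<subseteq> M"
proof -
  let ?A = "{I. ideal I R \<and> J \<subseteq> I \<and> \<one> \<notin> I}"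
  have "\<exists>U\<in>?A. \<forall>X\<in>C. X \<subseteq> U" if C: "C \<in> chains ?A" for C
  proof (cases "C = {}")
    case True
    then show ?thesis
      using J by auto
  next
    case False
    have "C \<subseteq> ?A"
      using chainsD2[OF C] .
    then have "ideal (\<Union>C) R" "J \<subseteq> \<Union>C" "\<one> \<notin> \<Union>C"
      using ideal_Union_chain[OF False] chainsD[OF C] False by blast+
    then show ?thesis
      by (intro bexI[of _ "\<Union>C"]) auto
  qed
  then obtain M where M: "M \<in> ?A" "\<forall>X\<in>?A. M \<subseteq> X \<longrightarrow> X = M"
    using Zorn_Lemma2[of ?A] by blast
  have "maximalideal M R"
  proof (rule maximalidealI)
    show "ideal M R" "carrier R \<noteq> M"
      using M by auto
    fix J' assume J': "ideal J' R" "M \<subseteq> J'" "J' \<subseteq> carrier R"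
    show "J' = M \<or> J' = carrier R"
      using M J' ideal.one_imp_carrier[OF J'(1)] by (cases "\<one> \<in> J'") auto
  qed
  then show ?thesis
    using M that by blast
qed

lemma respects_relations_of_generators:
  fixes n m :: nat
  assumes z: "\<And>i. i < n \<Longrightarrow> z i \<in> carrier R"
    and g: "\<And>j i. j < m \<Longrightarrow> i < n \<Longrightarrow> g j i \<in> carrier R"
    and gen: "\<forall>r. is_relation R n a r \<longrightarrow>
      (\<exists>c. (\<forall>j<m. c j \<in> carrier R) \<and> (\<forall>i<n. r i = (\<Oplus>j\<in>{..<m}. c j \<otimes> g j i)))"
    and gz: "\<forall>j<m. (\<Oplus>i\<in>{..<n}. g j i \<otimes> z i) = \<zero>"
  shows "respects_relations R n a {\<zero>} z"
  unfolding respects_relations_def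
proof (intro allI impI)
  fix r assume "is_relation R n a r"
  then obtain c where c: "\<forall>j<m. c j \<in> carrier R" "\<forall>i<n. r i = (\<Oplus>j\<in>{..<m}. c j \<otimes> g j i)"
    using gen by blast
  have "(\<Oplus>i\<in>{..<n}. r i \<otimes> z i) = (\<Oplus>i\<in>{..<n}. (\<Oplus>j\<in>{..<m}. c j \<otimes> g j i) \<otimes> z i)"
    using c z g by (intro fsum_cong) (auto intro!: fsum_closed)
  also have "\<dots> = (\<Oplus>j\<in>{..<m}. c j \<otimes> (\<Oplus>i\<in>{..<n}. g j i \<otimes> z i))"
    using c g z by (intro fsum_swap) auto
  also have "\<dots> = (\<Oplus>j\<in>{..<m}. \<zero>)"
    using gz c by (intro fsum_cong) auto
  finally show "(\<Oplus>i\<in>{..<n}. r i \<otimes> z i) \<in> {\<zero>}"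
    by (simp add: finsum_zero)
qed

lemma one_in_correction_ideal:
  fixes n m :: nat
  assumes a: "\<And>i. i < n \<Longrightarrow> a i \<in> carrier R" and g: "\<forall>j<m. is_relation R n a (g j)"
    and N: "submod R (lin_span R n a) N" and y: "\<forall>i<n. y i \<in> lin_span R n a"
    and resp: "respects_relations R n a N y"
    and loc: "\<And>P. maximalideal P R \<Longrightarrow>
      relation_lifting (localization R P) n (\<lambda>i. loc_cls R P (a i, \<one>))"
  shows "\<one> \<in> correction_ideal R n m g N y"
proof (rule ccontr)
  let ?J = "correction_ideal R n m g N y"
  have V: "lin_span R n a \<subseteq> carrier R"
    by (rule lin_span_subset_carrier[of n a, OF a])
  have "ideal ?J R"
    using g y V unfolding is_relation_def by (intro ideal_correction_ideal[OF N V]) auto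
  moreover assume "\<one> \<notin> ?J"
  ultimately obtain P where P: "maximalideal P R" "?J \<subseteq> P"
    by (rule ideal_in_maximalideal)
  interpret prime_localization R P
    using is_cring maximalideal_prime[OF P(1)]
    by (intro prime_localization.intro prime_localization_axioms.intro)
  obtain x w where x: "x \<in> S" and "\<forall>i<n. w i \<in> N"
    "\<forall>j<m. (\<Oplus>i\<in>{..<n}. g j i \<otimes> (x \<otimes> y i \<oplus> w i)) = \<zero>"
    using local_correction[where n=n and c=a, OF a loc[OF P(1)] g N y resp] .
  then have "x \<in> ?J"
    unfolding correction_ideal_def by blast
  then show False
    using P(2) x by blast
qed

lemma relation_lifting_of_local:
  fixes n m :: nat
  assumes a: "\<And>i. i < n \<Longrightarrow> a i \<in> carrier R" and g: "\<forall>j<m. is_relation R n a (g j)"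
    and gen: "\<forall>r. is_relation R n a r \<longrightarrow>
      (\<exists>c. (\<forall>j<m. c j \<in> carrier R) \<and> (\<forall>i<n. r i = (\<Oplus>j\<in>{..<m}. c j \<otimes> g j i)))"
    and loc: "\<And>P. maximalideal P R \<Longrightarrow>
      relation_lifting (localization R P) n (\<lambda>i. loc_cls R P (a i, \<one>))"
  shows "relation_lifting R n a"
  unfolding relation_lifting_def
proof (intro allI impI, elim conjE)
  let ?V = "lin_span R n a"
  fix N y assume N: "submod R ?V N" and y: "\<forall>i<n. y i \<in> ?V" and resp: "respects_relations R n a N y"
  interpret V: ideal ?V R
    by (rule lin_span_ideal[of n a, OF a])
  have yc: "\<And>i. i < n \<Longrightarrow> y i \<in> carrier R" and gc: "\<And>j i. j < m \<Longrightarrow> i < n \<Longrightarrow> g j i \<in> carrier R"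
    using y V.Icarr g unfolding is_relation_def by blast+
  obtain w where w: "\<forall>i<n. w i \<in> N" "\<forall>j<m. (\<Oplus>i\<in>{..<n}. g j i \<otimes> (\<one> \<otimes> y i \<oplus> w i)) = \<zero>"
    using one_in_correction_ideal[OF a g N y resp loc] unfolding correction_ideal_def by blast
  have wc: "\<And>i. i < n \<Longrightarrow> w i \<in> carrier R"
    using w(1) submod_subset_carrier[OF N V.a_subset] by blast
  have "\<forall>i<n. y i \<oplus> w i \<in> ?V"
    using y w(1) submod_subset[OF N] by (auto intro: V.a_closed)
  moreover have "\<forall>i<n. (y i \<oplus> w i) \<ominus> y i \<in> N"
  proof (intro allI impI)
    fix i assume i: "i < n"
    then have "(y i \<oplus> w i) \<ominus> y i = w i"
      using yc wc by algebra
    then show "(y i \<oplus> w i) \<ominus> y i \<in> N"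
      using w(1) i by simp
  qed
  moreover have "respects_relations R n a {\<zero>} (\<lambda>i. y i \<oplus> w i)"
  proof (rule respects_relations_of_generators[OF _ gc gen])
    show "\<And>i. i < n \<Longrightarrow> y i \<oplus> w i \<in> carrier R"
      using yc wc by blast
    have "(\<Oplus>i\<in>{..<n}. g j i \<otimes> (y i \<oplus> w i)) = (\<Oplus>i\<in>{..<n}. g j i \<otimes> (\<one> \<otimes> y i \<oplus> w i))"
      if "j < m" for j
      using that yc wc gc by (intro fsum_cong) auto
    then show "\<forall>j<m. (\<Oplus>i\<in>{..<n}. g j i \<otimes> (y i \<oplus> w i)) = \<zero>"
      using w(2) by simp
  qed
  ultimately show "\<exists>z. (\<forall>i<n. z i \<in> ?V) \<and> (\<forall>i<n. z i \<ominus> y i \<in> N) \<and> respects_relations R n a {\<zero>} z"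
    by (intro exI[of _ "\<lambda>i. y i \<oplus> w i"]) auto
qed

lemma fqp_ring_of_local:
  assumes coh: "coherent_ring R"
    and loc: "\<And>P. maximalideal P R \<Longrightarrow> fqp_ring (localization R P)"
  shows "fqp_ring R"
  unfolding fqp_ring_def
proof (intro allI impI, elim conjE)
  fix I assume "ideal I R" "fg_ideal R I"
  then have "fp_ideal R I"
    using coh unfolding coherent_ring_def by blast
  then obtain n m :: nat and a g where a: "\<forall>i<n. a i \<in> carrier R"
    and I: "I = {(\<Oplus>i\<in>{..<n}. r i \<otimes> a i) | r. \<forall>i<n. r i \<in> carrier R}"
    and g1: "\<forall>j<m. \<forall>i<n. g j i \<in> carrier R" and g2: "\<forall>j<m. (\<Oplus>i\<in>{..<n}. g j i \<otimes> a i) = \<zero>"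
    and gen: "\<forall>r. (\<forall>i<n. r i \<in> carrier R) \<and> (\<Oplus>i\<in>{..<n}. r i \<otimes> a i) = \<zero> \<longrightarrow>
      (\<exists>c. (\<forall>j<m. c j \<in> carrier R) \<and> (\<forall>i<n. r i = (\<Oplus>j\<in>{..<m}. c j \<otimes> g j i)))"
    unfolding fp_ideal_def by (elim exE conjE) (rule that, assumption+)
  have ac: "\<And>i. i < n \<Longrightarrow> a i \<in> carrier R"
    using a by blast
  have local_lifting: "relation_lifting (localization R P) n (\<lambda>i. loc_cls R P (a i, \<one>))"
    if P: "maximalideal P R" for P
  proof -
    interpret prime_localization R P
      using is_cring maximalideal_prime[OF P]
      by (intro prime_localization.intro prime_localization_axioms.intro)
    show ?thesis
      using Loc.relation_lifting_if_fqp_ring[of n "loc_tuple a", OF frac_closed[OF ac one_in_S] loc[OF P]] .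
  qed
  have grel: "\<forall>j<m. is_relation R n a (g j)"
    unfolding is_relation_def using g1 g2 by blast
  have ggen: "\<forall>r. is_relation R n a r \<longrightarrow>
      (\<exists>c. (\<forall>j<m. c j \<in> carrier R) \<and> (\<forall>i<n. r i = (\<Oplus>j\<in>{..<m}. c j \<otimes> g j i)))"
    using gen unfolding is_relation_def by blast
  have "relation_lifting R n a"
    using relation_lifting_of_local[OF ac grel ggen local_lifting] .
  moreover have "I = lin_span R n a"
    unfolding I lin_span_def ..
  ultimately show "quasi_projective R I"
    using quasi_projective_iff_relation_lifting[of n a, OF ac] by simp
qed

end

theorem proposition4p4:
  fixes A :: "('a, 'b) ring_scheme"
  assumes "cring A" and "coherent_ring A"
  shows "fqp_ring A \<longleftrightarrow> (\<forall>P. maximalideal P A \<longrightarrow> fqp_ring (localization A P))"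
proof
  assume fqp: "fqp_ring A"
  show "\<forall>P. maximalideal P A \<longrightarrow> fqp_ring (localization A P)"
  proof (intro allI impI)
    fix P assume "maximalideal P A"
    then interpret prime_localization A P
      using assms(1) cring.maximalideal_prime by (intro prime_localization.intro prime_localization_axioms.intro)
    show "fqp_ring (localization A P)"
      using fqp_ring_loc[OF fqp] .
  qed
next
  assume "\<forall>P. maximalideal P A \<longrightarrow> fqp_ring (localization A P)"
  then show "fqp_ring A"
    using cring.fqp_ring_of_local[OF assms] by blast
qed

end
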